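(* Let $X=\ell^p(\mathbb{Z})$ with $1\leq p<\infty$, or $X=c_0(\mathbb{Z})$, and let $w=\{w_j\}_{j\in\mathbb{Z}}$ be a bounded sequence of non-zero scalars. Let $B_w\colon X\to X$ be the bilateral backward weighted shift, $B_we_i=w_ie_{i-1}$ for all $i\in\mathbb{Z}$ (i.e. $(B_wx)_{i}=w_{i+1}x_{i+1}$), where $\{e_i\}_{i\in\mathbb{Z}}$ is the canonical basis. Then the following are equivalent: (1) $\liminf_{n\to\infty}\prod_{j=-n+1}^{0}|w_j|=0$ and $\sup_{k\in\mathbb{Z},n\in\mathbb{N}}\prod_{j=k}^{k+n}|w_j|=\infty$; (2) there exists a Li-Yorke scrambled pair for $B_w$; (3) $B_w$ is Li-Yorke chaotic; (4) $B_w$ admits a dense irregular manifold; (5) $B_w$ is densely uniformly Li-Yorke chaotic.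
   Context: A pair $(x,y)\in X\times X$ is Li-Yorke scrambled for $T$ if $\liminf_n\|T^nx-T^ny\|=0$ and $\limsup_n\|T^nx-T^ny\|>0$; $T$ is Li-Yorke chaotic if there is an uncountable set $S\subset X$ every pair of distinct points of which is Li-Yorke scrambled. A vector $x$ is irregular if $\liminf_n\|T^nx\|=0$ and $\limsup_n\|T^nx\|=\infty$; an irregular manifold is a vector subspace all of whose non-zero vectors are irregular. A subset $S\subset X$ with at least two points is uniformly Li-Yorke scrambled for $T$ if there exist sequences $\{p_n\}$, $\{q_n\}$ in $\mathbb{N}$ such that for all distinct $x,y\in S$: $\lim_n\|T^{p_n}x-T^{p_n}y\|=0$ and $\lim_n\|T^{q_n}x-T^{q_n}y\|=\infty$; $T$ is densely uniformly Li-Yorke chaotic if there is a dense, uncountable such set. *)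

theory Defs
  imports "HOL-Analysis.Analysis"
begin

definition lp_space :: "real \<Rightarrow> (int \<Rightarrow> 'a::real_normed_vector) set" where
  "lp_space p = {x. (\<lambda>i. norm (x i) powr p) summable_on UNIV}"

definition lp_norm :: "real \<Rightarrow> (int \<Rightarrow> 'a::real_normed_vector) \<Rightarrow> real" where
  "lp_norm p x = (\<Sum>\<^sub>\<infinity>i. norm (x i) powr p) powr (1 / p)"

definition c0_space :: "(int \<Rightarrow> 'a::real_normed_vector) set" where
  "c0_space = {x. filterlim x (nhds 0) cofinite}"

definition sup_norm :: "(int \<Rightarrow> 'a::real_normed_vector) \<Rightarrow> real" where
  "sup_norm x = (SUP i. norm (x i))"

definition bw_shift :: "(int \<Rightarrow> 'a::real_normed_field) \<Rightarrow> (int \<Rightarrow> 'a) \<Rightarrow> (int \<Rightarrow> 'a)" where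
  "bw_shift w x = (\<lambda>i. w (i + 1) * x (i + 1))"

definition dense_wrt :: "((int \<Rightarrow> 'a::real_normed_vector) \<Rightarrow> real) \<Rightarrow> (int \<Rightarrow> 'a) set \<Rightarrow> (int \<Rightarrow> 'a) set \<Rightarrow> bool" where
  "dense_wrt N X S \<longleftrightarrow> S \<subseteq> X \<and> (\<forall>x\<in>X. \<forall>e>0. \<exists>s\<in>S. N (\<lambda>i. x i - s i) < e)"

definition li_yorke_pair ::
  "((int \<Rightarrow> 'a::real_normed_vector) \<Rightarrow> real) \<Rightarrow> ((int \<Rightarrow> 'a) \<Rightarrow> (int \<Rightarrow> 'a)) \<Rightarrow> (int \<Rightarrow> 'a) \<Rightarrow> (int \<Rightarrow> 'a) \<Rightarrow> bool" where
  "li_yorke_pair N T x y \<longleftrightarrow>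
     liminf (\<lambda>n. ereal (N (\<lambda>i. (T ^^ n) x i - (T ^^ n) y i))) = 0 \<and>
     limsup (\<lambda>n. ereal (N (\<lambda>i. (T ^^ n) x i - (T ^^ n) y i))) > 0"

definition li_yorke_chaotic ::
  "((int \<Rightarrow> 'a::real_normed_vector) \<Rightarrow> real) \<Rightarrow> (int \<Rightarrow> 'a) set \<Rightarrow> ((int \<Rightarrow> 'a) \<Rightarrow> (int \<Rightarrow> 'a)) \<Rightarrow> bool" where
  "li_yorke_chaotic N X T \<longleftrightarrow>
     (\<exists>S \<subseteq> X. uncountable S \<and> (\<forall>x\<in>S. \<forall>y\<in>S. x \<noteq> y \<longrightarrow> li_yorke_pair N T x y))"

definition irregular_vector ::
  "((int \<Rightarrow> 'a::real_normed_vector) \<Rightarrow> real) \<Rightarrow> ((int \<Rightarrow> 'a) \<Rightarrow> (int \<Rightarrow> 'a)) \<Rightarrow> (int \<Rightarrow> 'a) \<Rightarrow> bool" where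
  "irregular_vector N T x \<longleftrightarrow>
     liminf (\<lambda>n. ereal (N ((T ^^ n) x))) = 0 \<and> limsup (\<lambda>n. ereal (N ((T ^^ n) x))) = \<infinity>"

definition seq_subspace :: "(int \<Rightarrow> 'a::real_normed_field) set \<Rightarrow> (int \<Rightarrow> 'a) set \<Rightarrow> bool" where
  "seq_subspace X M \<longleftrightarrow> M \<subseteq> X \<and> (\<lambda>i. 0) \<in> M \<and>
     (\<forall>x\<in>M. \<forall>y\<in>M. (\<lambda>i. x i + y i) \<in> M) \<and> (\<forall>c. \<forall>x\<in>M. (\<lambda>i. c * x i) \<in> M)"

definition dense_irregular_manifold ::
  "((int \<Rightarrow> 'a::real_normed_field) \<Rightarrow> real) \<Rightarrow> (int \<Rightarrow> 'a) set \<Rightarrow> ((int \<Rightarrow> 'a) \<Rightarrow> (int \<Rightarrow> 'a)) \<Rightarrow> bool" where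
  "dense_irregular_manifold N X T \<longleftrightarrow>
     (\<exists>M. seq_subspace X M \<and> dense_wrt N X M \<and>
          (\<forall>x\<in>M. x \<noteq> (\<lambda>i. 0) \<longrightarrow> irregular_vector N T x))"

definition uniformly_li_yorke_scrambled ::
  "((int \<Rightarrow> 'a::real_normed_vector) \<Rightarrow> real) \<Rightarrow> ((int \<Rightarrow> 'a) \<Rightarrow> (int \<Rightarrow> 'a)) \<Rightarrow> (int \<Rightarrow> 'a) set \<Rightarrow> bool" where
  "uniformly_li_yorke_scrambled N T S \<longleftrightarrow>
     (\<exists>x\<in>S. \<exists>y\<in>S. x \<noteq> y) \<and>
     (\<exists>p q :: nat \<Rightarrow> nat. \<forall>x\<in>S. \<forall>y\<in>S. x \<noteq> y \<longrightarrow>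
        ((\<lambda>n. N (\<lambda>i. (T ^^ p n) x i - (T ^^ p n) y i)) \<longlonglongrightarrow> 0) \<and>
        filterlim (\<lambda>n. N (\<lambda>i. (T ^^ q n) x i - (T ^^ q n) y i)) at_top sequentially)"

definition densely_uniformly_li_yorke_chaotic ::
  "((int \<Rightarrow> 'a::real_normed_vector) \<Rightarrow> real) \<Rightarrow> (int \<Rightarrow> 'a) set \<Rightarrow> ((int \<Rightarrow> 'a) \<Rightarrow> (int \<Rightarrow> 'a)) \<Rightarrow> bool" where
  "densely_uniformly_li_yorke_chaotic N X T \<longleftrightarrow>
     (\<exists>S. dense_wrt N X S \<and> uncountable S \<and> uniformly_li_yorke_scrambled N T S)"

end

theory Submission
  imports Defs
begin

(* If (x, y) is a Li-Yorke pair, the orbit of v = x - y comes back arbitrarily close to 0 without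
   converging to 0. Reading the orbit at a coordinate where v does not vanish shows that the
   products of the weights ending at a fixed site are frequently small, and this transfers to the
   site 0; if all products of consecutive weights were bounded, the orbit would stay small once it
   has been small, so these products are unbounded.

   Conversely, the two conditions allow one to choose times p k at which the weights around all
   sites used so far are tiny, and sites b k with times q k at which a block of weights is huge.
   Each basis vector is perturbed by a small multiple of a vector carried by the sites b k, whose
   coefficient at b k decays like (k + 1)^(-i) for the i-th generator. Every combination of these
   generators tends to 0 along p, every nonzero one blows up along q because its lowest-index
   generator dominates at b k, and their span is dense. So the span is a dense irregular manifold
   and, being uncountable and closed under differences, a dense uniformly Li-Yorke scrambled set;
   the remaining implications are immediate. *)

lemma liminf_ereal_eq_0_iff:
  fixes f :: "nat \<Rightarrow> real"
  assumes nonneg: "\<And>n. 0 \<le> f n"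
  shows "liminf (\<lambda>n. ereal (f n)) = 0 \<longleftrightarrow> (\<forall>e>0. \<exists>\<^sub>F n in sequentially. f n < e)"
proof
  assume lim: "liminf (\<lambda>n. ereal (f n)) = 0"
  show "\<forall>e>0. \<exists>\<^sub>F n in sequentially. f n < e"
  proof (intro allI impI)
    fix e :: real assume "0 < e"
    show "\<exists>\<^sub>F n in sequentially. f n < e"
    proof (rule ccontr)
      assume "\<not> (\<exists>\<^sub>F n in sequentially. f n < e)"
      then have "\<forall>\<^sub>F n in sequentially. ereal e \<le> ereal (f n)"
        by (simp add: not_frequently not_less)
      then have "ereal e \<le> liminf (\<lambda>n. ereal (f n))" by (rule Liminf_bounded)
      with lim \<open>0 < e\<close> show False by simp
    qed
  qed
next
  assume freq: "\<forall>e>0. \<exists>\<^sub>F n in sequentially. f n < e"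
  show "liminf (\<lambda>n. ereal (f n)) = 0"
  proof (rule antisym)
    show "0 \<le> liminf (\<lambda>n. ereal (f n))" using nonneg by (intro Liminf_bounded) auto
    show "liminf (\<lambda>n. ereal (f n)) \<le> 0"
    proof (rule ccontr)
      assume "\<not> liminf (\<lambda>n. ereal (f n)) \<le> 0"
      then have "0 < liminf (\<lambda>n. ereal (f n))" by simp
      from ereal_dense2[OF this] obtain z where z: "0 < ereal z" "ereal z < liminf (\<lambda>n. ereal (f n))"
        by blast
      have "\<forall>\<^sub>F n in sequentially. \<not> f n < z"
        by (rule eventually_mono[OF less_LiminfD[OF z(2)]]) auto
      moreover have "\<exists>\<^sub>F n in sequentially. f n < z" using freq z(1) by simp
      ultimately show False by (simp add: frequently_def)
    qed
  qed
qed

lemma limsup_ereal_eq_infinity_iff: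
  fixes f :: "nat \<Rightarrow> real"
  shows "limsup (\<lambda>n. ereal (f n)) = \<infinity> \<longleftrightarrow> (\<forall>Z. \<exists>\<^sub>F n in sequentially. Z < f n)"
proof
  assume lim: "limsup (\<lambda>n. ereal (f n)) = \<infinity>"
  show "\<forall>Z. \<exists>\<^sub>F n in sequentially. Z < f n"
  proof (intro allI; rule ccontr)
    fix Z assume "\<not> (\<exists>\<^sub>F n in sequentially. Z < f n)"
    then have "\<forall>\<^sub>F n in sequentially. ereal (f n) \<le> ereal Z" by (simp add: not_frequently not_less)
    then have "limsup (\<lambda>n. ereal (f n)) \<le> ereal Z" by (rule Limsup_bounded)
    with lim show False by simp
  qed
next
  assume freq: "\<forall>Z. \<exists>\<^sub>F n in sequentially. Z < f n"
  show "limsup (\<lambda>n. ereal (f n)) = \<infinity>"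
  proof (rule ccontr)
    assume "limsup (\<lambda>n. ereal (f n)) \<noteq> \<infinity>"
    then have "limsup (\<lambda>n. ereal (f n)) < \<infinity>" by (simp add: less_le)
    then obtain Z where "limsup (\<lambda>n. ereal (f n)) < ereal Z" using ereal_dense2 by blast
    then have "\<forall>\<^sub>F n in sequentially. \<not> Z < f n"
      by (rule eventually_mono[OF Limsup_lessD]) auto
    with freq show False by (simp add: frequently_def)
  qed
qed

text \<open>The index sequence r need not be monotone: positivity of f forces it to leave every
  finite initial segment.\<close>

lemma tendsto_0_along_imp_frequently_less:
  fixes f :: "nat \<Rightarrow> real"
  assumes pos: "\<And>n. 0 < f n" and lim: "(\<lambda>k. f (r k)) \<longlonglongrightarrow> 0" and "0 < e"
  shows "\<exists>\<^sub>F n in sequentially. f n < e"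
  unfolding frequently_sequentially
proof
  fix N0
  define \<mu> where "\<mu> = Min (insert e (f ` {..<N0}))"
  have "0 < \<mu>" unfolding \<mu>_def using pos \<open>0 < e\<close> by (subst Min_gr_iff) auto
  then have "\<forall>\<^sub>F k in sequentially. f (r k) < \<mu>" using lim order_tendstoD(2) by blast
  then obtain k where k: "f (r k) < \<mu>" by (auto simp: eventually_sequentially)
  have "\<not> r k < N0" using k by (auto simp: \<mu>_def)
  moreover have "\<mu> \<le> e" by (simp add: \<mu>_def)
  ultimately show "\<exists>n\<ge>N0. f n < e" using k by (intro exI[of _ "r k"]) auto
qed

lemma filterlim_at_top_along_imp_frequently_greater:
  fixes f :: "nat \<Rightarrow> real"
  assumes lim: "filterlim (\<lambda>k. f (r k)) at_top sequentially"
  shows "\<exists>\<^sub>F n in sequentially. Z < f n"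
  unfolding frequently_sequentially
proof
  fix N0
  define \<mu> where "\<mu> = Max (insert Z (f ` {..<N0}))"
  have "\<forall>\<^sub>F k in sequentially. \<mu> < f (r k)" using lim by (simp add: filterlim_at_top_dense)
  then obtain k where k: "\<mu> < f (r k)" by (auto simp: eventually_sequentially)
  have "\<not> r k < N0" using k by (auto simp: \<mu>_def)
  moreover have "Z \<le> \<mu>" by (simp add: \<mu>_def)
  ultimately show "\<exists>n\<ge>N0. Z < f n" using k by (intro exI[of _ "r k"]) auto
qed

lemma tendsto_one_over_Suc: "(\<lambda>l. 1 / (real l + 1)) \<longlonglongrightarrow> 0"
  using LIMSEQ_inverse_real_of_nat by (simp add: inverse_eq_divide add.commute)

lemma norm_sum_powers_ge_lowest_term:
  fixes a :: "nat \<Rightarrow> 'a::real_normed_field" and \<gamma> :: real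
  assumes \<gamma>: "0 \<le> \<gamma>" "\<gamma> \<le> 1" and "i0 < n" and below: "\<And>i. i < i0 \<Longrightarrow> a i = 0"
  shows "\<gamma> ^ i0 * (norm (a i0) - (\<Sum>i<n. norm (a i)) * \<gamma>) \<le> norm (\<Sum>i<n. a i * of_real (\<gamma> ^ i))"
proof -
  have split: "(\<Sum>i<n. a i * of_real (\<gamma> ^ i))
      = a i0 * of_real (\<gamma> ^ i0) + (\<Sum>i\<in>{..<n} - {i0}. a i * of_real (\<gamma> ^ i))"
    using \<open>i0 < n\<close> by (simp add: sum.remove)
  have "norm (\<Sum>i\<in>{..<n} - {i0}. a i * of_real (\<gamma> ^ i)) \<le> (\<Sum>i\<in>{..<n} - {i0}. norm (a i) * \<gamma> ^ Suc i0)"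
  proof (rule order.trans[OF norm_sum sum_mono])
    fix i assume i: "i \<in> {..<n} - {i0}"
    show "norm (a i * of_real (\<gamma> ^ i)) \<le> norm (a i) * \<gamma> ^ Suc i0"
    proof (cases "i < i0")
      case False
      then have "\<gamma> ^ i \<le> \<gamma> ^ Suc i0" using i \<gamma> by (intro power_decreasing) auto
      then show ?thesis using \<gamma> by (simp add: norm_mult abs_of_nonneg mult_left_mono del: of_real_power)
    qed (simp add: below)
  qed
  also have "\<dots> \<le> (\<Sum>i<n. norm (a i)) * \<gamma> ^ Suc i0"
    using \<gamma> by (simp add: sum_distrib_right[symmetric] sum_mono2 mult_right_mono)
  finally have rest:
    "norm (\<Sum>i\<in>{..<n} - {i0}. a i * of_real (\<gamma> ^ i)) \<le> (\<Sum>i<n. norm (a i)) * \<gamma> ^ Suc i0" .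
  have "norm (a i0 * of_real (\<gamma> ^ i0)) - norm (\<Sum>i\<in>{..<n} - {i0}. a i * of_real (\<gamma> ^ i))
      \<le> norm (\<Sum>i<n. a i * of_real (\<gamma> ^ i))"
    unfolding split by (rule norm_diff_ineq)
  moreover have "norm (a i0 * of_real (\<gamma> ^ i0)) = \<gamma> ^ i0 * norm (a i0)"
    using \<gamma> by (simp add: norm_mult abs_of_nonneg del: of_real_power)
  ultimately have "\<gamma> ^ i0 * norm (a i0) - (\<Sum>i<n. norm (a i)) * \<gamma> ^ Suc i0
      \<le> norm (\<Sum>i<n. a i * of_real (\<gamma> ^ i))"
    using rest by linarith
  then show ?thesis by (simp add: algebra_simps)
qed

lemma pow_mult_inverse_pow_ge: "i0 \<le> k \<Longrightarrow> real k + 1 \<le> (real k + 1) ^ (k + 1) * (1 / (real k + 1)) ^ i0"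
proof -
  assume "i0 \<le> k"
  then have "(real k + 1) ^ (k + 1) * (1 / (real k + 1)) ^ i0 = (real k + 1) ^ (k + 1 - i0)"
    by (simp add: power_one_over power_diff)
  also have "(real k + 1) ^ 1 \<le> \<dots>" using \<open>i0 \<le> k\<close> by (intro power_increasing) auto
  finally show ?thesis by simp
qed

section \<open>Finite combinations of sequences\<close>

definition unit_seq :: "int \<Rightarrow> int \<Rightarrow> 'a::zero_neq_one" where
  "unit_seq m = (\<lambda>i. if i = m then 1 else 0)"

lemma sum_unit_seq:
  fixes c :: "int \<Rightarrow> 'a::comm_ring_1"
  shows "finite F \<Longrightarrow> (\<Sum>m\<in>F. c m * unit_seq m j) = (if j \<in> F then c j else 0)"
proof -
  have "(\<Sum>m\<in>F. c m * unit_seq m j) = (\<Sum>m\<in>F. if j = m then c m else 0)"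
    by (rule sum.cong) (auto simp: unit_seq_def)
  then show "finite F \<Longrightarrow> ?thesis" by simp
qed

definition combinations :: "(nat \<Rightarrow> int \<Rightarrow> 'a::comm_ring_1) \<Rightarrow> (int \<Rightarrow> 'a) set" where
  "combinations g = {x. \<exists>c n. x = (\<lambda>j. \<Sum>i<n. c i * g i j)}"

lemma combination_in_combinations: "(\<lambda>j. \<Sum>i<n. c i * g i j) \<in> combinations g"
  unfolding combinations_def by blast

lemma combinationsE:
  assumes "x \<in> combinations g"
  obtains c n where "x = (\<lambda>j. \<Sum>i<n. c i * g i j)"
  using assms unfolding combinations_def by blast

lemma zero_in_combinations: "(\<lambda>j. 0) \<in> combinations g"
  using combination_in_combinations[where n=0 and g=g] by simp

lemma generator_in_combinations: "g i \<in> combinations g"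
proof -
  have "g i = (\<lambda>j. \<Sum>k<Suc i. (if k = i then 1 else 0) * g k j)"
    by (simp add: if_distrib cong: if_cong)
  then show ?thesis by (simp only: combination_in_combinations)
qed

lemma scale_in_combinations:
  assumes "x \<in> combinations g" shows "(\<lambda>j. a * x j) \<in> combinations g"
proof -
  obtain c n where "x = (\<lambda>j. \<Sum>i<n. c i * g i j)" using assms by (rule combinationsE)
  then have "(\<lambda>j. a * x j) = (\<lambda>j. \<Sum>i<n. (a * c i) * g i j)"
    by (simp add: sum_distrib_left mult.assoc)
  then show ?thesis by (simp only: combination_in_combinations)
qed

lemma sum_lessThan_pad:
  fixes c :: "nat \<Rightarrow> 'a::comm_ring_1"
  assumes "n \<le> L"
  shows "(\<Sum>i<n. c i * g i j) = (\<Sum>i<L. (if i < n then c i else 0) * g i j)"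
  using assms by (intro sum.mono_neutral_cong_left) auto

lemma add_in_combinations:
  assumes "x \<in> combinations g" "y \<in> combinations g"
  shows "(\<lambda>j. x j + y j) \<in> combinations g"
proof -
  obtain c n where x: "x = (\<lambda>j. \<Sum>i<n. c i * g i j)" using assms(1) by (rule combinationsE)
  obtain d m where y: "y = (\<lambda>j. \<Sum>i<m. d i * g i j)" using assms(2) by (rule combinationsE)
  have "(\<lambda>j. x j + y j) =
      (\<lambda>j. \<Sum>i<n + m. ((if i < n then c i else 0) + (if i < m then d i else 0)) * g i j)"
    unfolding x y
    by (simp add: sum_lessThan_pad[of n "n + m"] sum_lessThan_pad[of m "n + m"] distrib_right
        sum.distrib)
  then show ?thesis by (simp only: combination_in_combinations)
qed

lemma diff_in_combinations:
  assumes "x \<in> combinations g" "y \<in> combinations g"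
  shows "(\<lambda>j. x j - y j) \<in> combinations g"
  using add_in_combinations[OF assms(1) scale_in_combinations[OF assms(2), of "- 1"]] by simp

lemma sum_in_combinations:
  "finite F \<Longrightarrow> (\<And>m. m \<in> F \<Longrightarrow> f m \<in> combinations g) \<Longrightarrow> (\<lambda>j. \<Sum>m\<in>F. f m j) \<in> combinations g"
  by (induction F rule: finite_induct) (auto intro: zero_in_combinations add_in_combinations)

lemma uncountable_combinations:
  fixes g :: "nat \<Rightarrow> int \<Rightarrow> 'a::real_normed_field"
  assumes "g i \<noteq> (\<lambda>j. 0)"
  shows "uncountable (combinations g)"
proof
  assume countable: "countable (combinations g)"
  obtain j where j: "g i j \<noteq> 0" using assms by auto
  have "inj (\<lambda>r::real. \<lambda>j. of_real r * g i j)"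
    by (rule injI) (metis j mult_cancel_right of_real_eq_iff)
  moreover have "range (\<lambda>r::real. \<lambda>j. of_real r * g i j) \<subseteq> combinations g"
    by (auto intro: scale_in_combinations generator_in_combinations)
  ultimately have "countable (UNIV :: real set)"
    using countable countable_image_inj_on countable_subset by blast
  then show False using uncountable_UNIV_real by simp
qed

section \<open>Sequence spaces on the integers\<close>

text \<open>The properties of l^p (1 \<le> p < \<infinity>) and c_0 that the argument uses. The constant K of the
  quasi-triangle inequality spares us Minkowski's inequality; the last two assumptions say that
  l^1 embeds with norm at most 1, for sequences supported on the range of an injection \<beta> so that
  their sums are ordinary series.\<close>

locale sequence_space =
  fixes X :: "(int \<Rightarrow> 'a::real_normed_field) set" and N :: "(int \<Rightarrow> 'a) \<Rightarrow> real" and K :: real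
  assumes norm_le_N: "x \<in> X \<Longrightarrow> norm (x i) \<le> N x"
    and K_ge_1: "1 \<le> K"
    and add_mem: "x \<in> X \<Longrightarrow> y \<in> X \<Longrightarrow> (\<lambda>i. x i + y i) \<in> X"
    and N_add_le: "x \<in> X \<Longrightarrow> y \<in> X \<Longrightarrow> N (\<lambda>i. x i + y i) \<le> K * (N x + N y)"
    and dominated_mem: "y \<in> X \<Longrightarrow> 0 \<le> c \<Longrightarrow> (\<And>i. norm (x i) \<le> c * norm (y (i + s))) \<Longrightarrow> x \<in> X"
    and N_dominated_le:
      "y \<in> X \<Longrightarrow> 0 \<le> c \<Longrightarrow> (\<And>i. norm (x i) \<le> c * norm (y (i + s))) \<Longrightarrow> N x \<le> c * N y"
    and truncation_small: "x \<in> X \<Longrightarrow> 0 < e \<Longrightarrow> \<exists>F. finite F \<and> N (\<lambda>i. if i \<in> F then 0 else x i) < e"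
    and l1_mem: "inj \<beta> \<Longrightarrow> (\<And>j. j \<notin> range \<beta> \<Longrightarrow> x j = 0) \<Longrightarrow> summable (\<lambda>k. norm (x (\<beta> k))) \<Longrightarrow> x \<in> X"
    and N_le_l1: "inj \<beta> \<Longrightarrow> (\<And>j. j \<notin> range \<beta> \<Longrightarrow> x j = 0) \<Longrightarrow> summable (\<lambda>k. norm (x (\<beta> k))) \<Longrightarrow>
      N x \<le> (\<Sum>k. norm (x (\<beta> k)))"
begin

lemma N_nonneg: "x \<in> X \<Longrightarrow> 0 \<le> N x"
  using norm_le_N[of x 0] norm_ge_zero order.trans by blast

lemma zero_mem: "(\<lambda>i. 0) \<in> X"
  by (rule l1_mem[of int]) (auto simp: inj_def)

lemma scale_mem: "x \<in> X \<Longrightarrow> (\<lambda>i. c * x i) \<in> X"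
  by (rule dominated_mem[of x "norm c" _ 0]) (auto simp: norm_mult)

lemma N_scale_le: "x \<in> X \<Longrightarrow> N (\<lambda>i. c * x i) \<le> norm c * N x"
  by (rule N_dominated_le[of x "norm c" _ 0]) (auto simp: norm_mult)

lemma N_zero: "N (\<lambda>i. 0) = 0"
  using N_scale_le[OF zero_mem, of 0] N_nonneg[OF zero_mem] by simp

lemma diff_mem:
  assumes "x \<in> X" "y \<in> X" shows "(\<lambda>i. x i - y i) \<in> X"
  using add_mem[OF assms(1) scale_mem[OF assms(2), of "- 1"]] by simp

lemma unit_seq_mem: "unit_seq m \<in> X"
proof (rule l1_mem[of "\<lambda>k. m + int k"])
  have "(\<lambda>k. norm (unit_seq m (m + int k) :: 'a)) = (\<lambda>k. if k = 0 then 1 else 0)"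
    by (auto simp: unit_seq_def)
  then show "summable (\<lambda>k. norm (unit_seq m (m + int k) :: 'a))" by simp
qed (auto simp: inj_def unit_seq_def)

lemma sum_mem: "finite F \<Longrightarrow> (\<And>m. m \<in> F \<Longrightarrow> f m \<in> X) \<Longrightarrow> (\<lambda>i. \<Sum>m\<in>F. f m i) \<in> X"
  by (induction F rule: finite_induct) (auto intro: zero_mem add_mem)

lemma N_sum_le:
  assumes "finite F" "\<And>m. m \<in> F \<Longrightarrow> f m \<in> X"
  shows "N (\<lambda>i. \<Sum>m\<in>F. f m i) \<le> K ^ card F * (\<Sum>m\<in>F. N (f m))"
  using assms
proof (induction F rule: finite_induct)
  case empty then show ?case by (simp add: N_zero)
next
  case (insert a F)
  let ?S = "\<lambda>i. \<Sum>m\<in>F. f m i"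
  have "N (\<lambda>i. f a i + ?S i) \<le> K * (N (f a) + N ?S)"
    using insert by (intro N_add_le sum_mem) auto
  also have "\<dots> \<le> K * (K ^ card F * N (f a) + K ^ card F * (\<Sum>m\<in>F. N (f m)))"
    using insert K_ge_1 N_nonneg[of "f a"]
    by (intro mult_left_mono add_mono) (auto simp: mult_le_cancel_right1)
  finally show ?case using insert by (simp add: algebra_simps)
qed

lemma seq_subspace_combinations:
  assumes "\<And>i. g i \<in> X"
  shows "seq_subspace X (combinations g)"
  unfolding seq_subspace_def
proof (intro conjI ballI allI subsetI zero_in_combinations add_in_combinations scale_in_combinations)
  fix x assume "x \<in> combinations g"
  then obtain c n where "x = (\<lambda>j. \<Sum>i<n. c i * g i j)" by (rule combinationsE)
  then show "x \<in> X" using sum_mem[of "{..<n}" "\<lambda>i j. c i * g i j"] scale_mem assms by simp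
qed

lemma tendsto_N_combination:
  fixes f :: "nat \<Rightarrow> nat \<Rightarrow> int \<Rightarrow> 'a"
  assumes mem: "\<And>i l. f i l \<in> X" and lim: "\<And>i. i < n \<Longrightarrow> (\<lambda>l. N (f i l)) \<longlonglongrightarrow> 0"
  shows "(\<lambda>l. N (\<lambda>j. \<Sum>i<n. c i * f i l j)) \<longlonglongrightarrow> 0"
proof (rule tendsto_sandwich)
  have "(\<lambda>j. \<Sum>i<n. c i * f i l j) \<in> X" for l
    by (rule sum_mem) (auto intro: scale_mem mem)
  then show "\<forall>\<^sub>F l in sequentially. 0 \<le> N (\<lambda>j. \<Sum>i<n. c i * f i l j)"
    by (intro always_eventually allI N_nonneg)
  show "\<forall>\<^sub>F l in sequentially. N (\<lambda>j. \<Sum>i<n. c i * f i l j) \<le> K ^ n * (\<Sum>i<n. norm (c i) * N (f i l))"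
  proof (intro always_eventually allI)
    fix l
    have "N (\<lambda>j. \<Sum>i<n. c i * f i l j) \<le> K ^ n * (\<Sum>i<n. N (\<lambda>j. c i * f i l j))"
      using N_sum_le[of "{..<n}" "\<lambda>i j. c i * f i l j"] mem scale_mem by simp
    also have "\<dots> \<le> K ^ n * (\<Sum>i<n. norm (c i) * N (f i l))"
      using K_ge_1 mem by (intro mult_left_mono sum_mono N_scale_le) auto
    finally show "N (\<lambda>j. \<Sum>i<n. c i * f i l j) \<le> K ^ n * (\<Sum>i<n. norm (c i) * N (f i l))" .
  qed
  show "(\<lambda>l. K ^ n * (\<Sum>i<n. norm (c i) * N (f i l))) \<longlonglongrightarrow> 0"
    using lim by (auto intro!: tendsto_mult_right_zero tendsto_null_sum)
qed simp

end

lemma mem_c0_space_iff: "x \<in> c0_space \<longleftrightarrow> (\<forall>e>0. finite {i. e \<le> norm (x i)})"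
  unfolding c0_space_def tendsto_iff eventually_cofinite by (simp add: not_less)

lemma bdd_above_norm_c0:
  assumes "x \<in> c0_space" shows "bdd_above (range (\<lambda>i. norm (x i)))"
proof -
  have fin: "finite {i. 1 \<le> norm (x i)}" using assms unfolding mem_c0_space_iff by simp
  have "norm (x i) \<le> max 1 (Max ((\<lambda>i. norm (x i)) ` {i. 1 \<le> norm (x i)}))" for i
    using fin by (cases "1 \<le> norm (x i)") (auto intro!: Max_ge max.coboundedI2)
  then show ?thesis by (auto intro!: bdd_aboveI2)
qed

lemma norm_le_sup_norm: "x \<in> c0_space \<Longrightarrow> norm (x i) \<le> sup_norm x"
  unfolding sup_norm_def by (rule cSUP_upper) (auto intro: bdd_above_norm_c0)

lemma sup_norm_le: "(\<And>i. norm (x i) \<le> c) \<Longrightarrow> sup_norm x \<le> c"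
  unfolding sup_norm_def by (rule cSUP_least) auto

lemma c0_space_add: "x \<in> c0_space \<Longrightarrow> y \<in> c0_space \<Longrightarrow> (\<lambda>i. x i + y i) \<in> c0_space"
  unfolding c0_space_def using tendsto_add by fastforce

lemma c0_space_dominated:
  assumes y: "y \<in> c0_space" and c: "0 \<le> c" and le: "\<And>i. norm (x i) \<le> c * norm (y (i + s))"
  shows "x \<in> c0_space"
  unfolding mem_c0_space_iff
proof (intro allI impI)
  fix e :: real assume "0 < e"
  show "finite {i. e \<le> norm (x i)}"
  proof (cases "c = 0")
    case True
    then show ?thesis using le \<open>0 < e\<close> by (simp add: not_le)
  next
    case False
    have "{i. e \<le> norm (x i)} \<subseteq> (\<lambda>j. j - s) ` {j. e / c \<le> norm (y j)}"
    proof
      fix i assume "i \<in> {i. e \<le> norm (x i)}"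
      then have "e / c \<le> norm (y (i + s))"
        using le[of i] c False by (simp add: divide_le_eq mult.commute)
      then show "i \<in> (\<lambda>j. j - s) ` {j. e / c \<le> norm (y j)}" by (auto intro!: image_eqI[of _ _ "i + s"])
    qed
    moreover have "finite {j. e / c \<le> norm (y j)}"
      using y c False \<open>0 < e\<close> unfolding mem_c0_space_iff by simp
    ultimately show ?thesis using finite_subset by blast
  qed
qed

lemma c0_space_truncation:
  assumes "x \<in> c0_space" "0 < e"
  shows "\<exists>F. finite F \<and> sup_norm (\<lambda>i. if i \<in> F then 0 else x i) < e"
proof (intro exI conjI)
  have "0 < e / 2" using assms by simp
  then show "finite {i. e / 2 \<le> norm (x i)}" using assms unfolding mem_c0_space_iff by blast
  have "sup_norm (\<lambda>i. if i \<in> {i. e / 2 \<le> norm (x i)} then 0 else x i) \<le> e / 2"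
    by (rule sup_norm_le) (use assms in auto)
  then show "sup_norm (\<lambda>i. if i \<in> {i. e / 2 \<le> norm (x i)} then 0 else x i) < e"
    using assms by linarith
qed

lemma c0_space_l1:
  assumes vanish: "\<And>j. j \<notin> range \<beta> \<Longrightarrow> x j = 0"
    and sum: "summable (\<lambda>k. norm (x (\<beta> k)))"
  shows "x \<in> c0_space \<and> sup_norm x \<le> (\<Sum>k. norm (x (\<beta> k)))"
proof
  show "x \<in> c0_space" unfolding mem_c0_space_iff
  proof (intro allI impI)
    fix e :: real assume "0 < e"
    then have "\<forall>\<^sub>F k in sequentially. norm (x (\<beta> k)) < e"
      using summable_LIMSEQ_zero[OF sum] by (simp add: order_tendstoD(2))
    then have "finite {k. e \<le> norm (x (\<beta> k))}"
      by (simp add: cofinite_eq_sequentially[symmetric] eventually_cofinite not_less)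
    moreover have "{i. e \<le> norm (x i)} \<subseteq> \<beta> ` {k. e \<le> norm (x (\<beta> k))}"
      using vanish \<open>0 < e\<close> by (force simp: not_le)
    ultimately show "finite {i. e \<le> norm (x i)}" using finite_subset by blast
  qed
  show "sup_norm x \<le> (\<Sum>k. norm (x (\<beta> k)))"
  proof (rule sup_norm_le)
    fix i
    show "norm (x i) \<le> (\<Sum>k. norm (x (\<beta> k)))"
    proof (cases "i \<in> range \<beta>")
      case True
      then obtain k where "i = \<beta> k" by auto
      then show ?thesis using sum_le_suminf[OF sum, of "{k}"] by simp
    qed (use vanish sum in \<open>auto intro: suminf_nonneg\<close>)
  qed
qed

lemma sequence_space_c0: "sequence_space (c0_space :: (int \<Rightarrow> 'a::real_normed_field) set) sup_norm 1"
proof unfold_locales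
  fix x y :: "int \<Rightarrow> 'a" and i s :: int and c e :: real and \<beta> :: "nat \<Rightarrow> int"
  show "x \<in> c0_space \<Longrightarrow> norm (x i) \<le> sup_norm x" by (rule norm_le_sup_norm)
  show "x \<in> c0_space \<Longrightarrow> y \<in> c0_space \<Longrightarrow> (\<lambda>i. x i + y i) \<in> c0_space" by (rule c0_space_add)
  show "sup_norm (\<lambda>i. x i + y i) \<le> 1 * (sup_norm x + sup_norm y)"
    if "x \<in> c0_space" "y \<in> c0_space"
  proof -
    have "norm (x i + y i) \<le> sup_norm x + sup_norm y" for i
      using norm_triangle_ineq[of "x i" "y i"] norm_le_sup_norm[OF that(1), of i]
        norm_le_sup_norm[OF that(2), of i] by linarith
    then show ?thesis by (simp add: sup_norm_le)
  qed
  show "y \<in> c0_space \<Longrightarrow> 0 \<le> c \<Longrightarrow> (\<And>i. norm (x i) \<le> c * norm (y (i + s))) \<Longrightarrow> x \<in> c0_space"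
    by (rule c0_space_dominated)
  show "sup_norm x \<le> c * sup_norm y"
    if "y \<in> c0_space" "0 \<le> c" "\<And>i. norm (x i) \<le> c * norm (y (i + s))"
    using that by (intro sup_norm_le) (meson mult_left_mono norm_le_sup_norm order.trans)
  show "x \<in> c0_space \<Longrightarrow> 0 < e \<Longrightarrow> \<exists>F. finite F \<and> sup_norm (\<lambda>i. if i \<in> F then 0 else x i) < e"
    by (rule c0_space_truncation)
  show "inj \<beta> \<Longrightarrow> (\<And>j. j \<notin> range \<beta> \<Longrightarrow> x j = 0) \<Longrightarrow> summable (\<lambda>k. norm (x (\<beta> k))) \<Longrightarrow>
      x \<in> c0_space"
    and "inj \<beta> \<Longrightarrow> (\<And>j. j \<notin> range \<beta> \<Longrightarrow> x j = 0) \<Longrightarrow> summable (\<lambda>k. norm (x (\<beta> k))) \<Longrightarrow>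
      sup_norm x \<le> (\<Sum>k. norm (x (\<beta> k)))"
    using c0_space_l1 by blast+
qed simp

lemma lp_sum_nonneg: "0 \<le> infsum (\<lambda>i. norm (x i) powr p) A"
  by (rule infsum_nonneg) simp

lemma norm_le_lp_norm:
  assumes "1 \<le> p" "x \<in> lp_space p" shows "norm (x i) \<le> lp_norm p x"
proof -
  have "(\<lambda>i. norm (x i) powr p) summable_on UNIV" using assms by (simp add: lp_space_def)
  from finite_sum_le_infsum[OF this, of "{i}"]
  have "norm (x i) powr p \<le> infsum (\<lambda>i. norm (x i) powr p) UNIV" by simp
  then have "(norm (x i) powr p) powr (1/p) \<le> (infsum (\<lambda>i. norm (x i) powr p) UNIV) powr (1/p)"
    using assms by (intro powr_mono2) auto
  then show ?thesis using assms by (simp add: powr_powr lp_norm_def)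
qed

lemma lp_space_dominated:
  assumes p: "1 \<le> p" and y: "y \<in> lp_space p" and c: "0 \<le> c"
    and le: "\<And>i. norm (x i) \<le> c * norm (y (i + s))"
  shows "x \<in> lp_space p \<and> lp_norm p x \<le> c * lp_norm p y"
proof -
  have sy: "(\<lambda>i. norm (y i) powr p) summable_on UNIV" using y by (simp add: lp_space_def)
  have bij: "bij_betw (\<lambda>i. i + s) UNIV UNIV"
    by (rule bij_betw_byWitness[where f'="\<lambda>i. i - s"]) auto
  have sy': "(\<lambda>i. norm (y (i + s)) powr p) summable_on UNIV"
    using summable_on_reindex_bij_betw[OF bij, of "\<lambda>i. norm (y i) powr p"] sy by simp
  have shift: "infsum (\<lambda>i. norm (y (i + s)) powr p) UNIV = infsum (\<lambda>i. norm (y i) powr p) UNIV"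
    using infsum_reindex_bij_betw[OF bij, of "\<lambda>i. norm (y i) powr p"] by simp
  have le_p: "norm (x i) powr p \<le> c powr p * norm (y (i + s)) powr p" for i
  proof -
    have "norm (x i) powr p \<le> (c * norm (y (i + s))) powr p"
      using le[of i] p by (intro powr_mono2) auto
    also have "\<dots> = c powr p * norm (y (i + s)) powr p" using c by (simp add: powr_mult)
    finally show ?thesis .
  qed
  have sc: "(\<lambda>i. c powr p * norm (y (i + s)) powr p) summable_on UNIV"
    using sy' by (rule summable_on_cmult_right)
  have sx: "(\<lambda>i. norm (x i) powr p) summable_on UNIV"
    by (rule summable_on_comparison_test[OF sc]) (use le_p in auto)
  have "infsum (\<lambda>i. norm (x i) powr p) UNIV \<le> infsum (\<lambda>i. c powr p * norm (y (i + s)) powr p) UNIV"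
    by (rule infsum_mono[OF sx sc le_p])
  also have "\<dots> = c powr p * infsum (\<lambda>i. norm (y i) powr p) UNIV"
    using shift by (simp add: infsum_cmult_right')
  finally have "lp_norm p x \<le> (c powr p * infsum (\<lambda>i. norm (y i) powr p) UNIV) powr (1/p)"
    unfolding lp_norm_def using p by (intro powr_mono2) (auto intro: lp_sum_nonneg)
  also have "\<dots> = c * lp_norm p y"
    using c p by (simp add: powr_mult lp_sum_nonneg powr_powr lp_norm_def)
  finally show ?thesis using sx by (simp add: lp_space_def)
qed

lemma max_powr_le: "0 \<le> (a::real) \<Longrightarrow> 0 \<le> b \<Longrightarrow> (max a b) powr q \<le> a powr q + b powr q"
  by (simp add: max_def)

lemma lp_space_add:
  assumes p: "1 \<le> p" and x: "x \<in> lp_space p" and y: "y \<in> lp_space p"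
  shows "(\<lambda>i. x i + y i) \<in> lp_space p \<and> lp_norm p (\<lambda>i. x i + y i) \<le> 4 * (lp_norm p x + lp_norm p y)"
proof -
  define Sx where "Sx = infsum (\<lambda>i. norm (x i) powr p) UNIV"
  define Sy where "Sy = infsum (\<lambda>i. norm (y i) powr p) UNIV"
  have sx: "(\<lambda>i. norm (x i) powr p) summable_on UNIV" using x by (simp add: lp_space_def)
  have sy: "(\<lambda>i. norm (y i) powr p) summable_on UNIV" using y by (simp add: lp_space_def)
  have Sx0: "Sx \<ge> 0" and Sy0: "Sy \<ge> 0" unfolding Sx_def Sy_def by (auto intro: lp_sum_nonneg)
  have le: "norm (x i + y i) powr p \<le> 2 powr p * (norm (x i) powr p + norm (y i) powr p)" for i
  proof -
    have "norm (x i + y i) \<le> 2 * max (norm (x i)) (norm (y i))"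
      using norm_triangle_ineq[of "x i" "y i"] by linarith
    then have "norm (x i + y i) powr p \<le> (2 * max (norm (x i)) (norm (y i))) powr p"
      using p by (intro powr_mono2) auto
    also have "\<dots> = 2 powr p * (max (norm (x i)) (norm (y i))) powr p" by (simp add: powr_mult)
    also have "\<dots> \<le> 2 powr p * (norm (x i) powr p + norm (y i) powr p)"
      by (intro mult_left_mono max_powr_le) auto
    finally show ?thesis .
  qed
  have sc: "(\<lambda>i. 2 powr p * (norm (x i) powr p + norm (y i) powr p)) summable_on UNIV"
    by (intro summable_on_cmult_right summable_on_add sx sy)
  have sxy: "(\<lambda>i. norm (x i + y i) powr p) summable_on UNIV"
    by (rule summable_on_comparison_test[OF sc]) (use le in auto)
  have "infsum (\<lambda>i. norm (x i + y i) powr p) UNIV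
      \<le> infsum (\<lambda>i. 2 powr p * (norm (x i) powr p + norm (y i) powr p)) UNIV"
    by (rule infsum_mono[OF sxy sc le])
  also have "\<dots> = 2 powr p * (Sx + Sy)"
    unfolding Sx_def Sy_def by (simp add: infsum_cmult_right' infsum_add sx sy)
  finally have "lp_norm p (\<lambda>i. x i + y i) \<le> (2 powr p * (Sx + Sy)) powr (1/p)"
    unfolding lp_norm_def using p by (intro powr_mono2) (auto intro: lp_sum_nonneg)
  also have "\<dots> = 2 * (Sx + Sy) powr (1/p)"
    using p Sx0 Sy0 by (simp add: powr_mult powr_powr)
  also have "(Sx + Sy) powr (1/p) \<le> (2 * max Sx Sy) powr (1/p)"
    using p Sx0 Sy0 by (intro powr_mono2) auto
  also have "\<dots> = 2 powr (1/p) * max Sx Sy powr (1/p)"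
    using Sx0 Sy0 by (simp add: powr_mult)
  also have "\<dots> \<le> 2 * (Sx powr (1/p) + Sy powr (1/p))"
  proof (rule mult_mono)
    show "2 powr (1/p) \<le> 2" using powr_mono[of "1/p" 1 2] p by simp
    show "max Sx Sy powr (1/p) \<le> Sx powr (1/p) + Sy powr (1/p)"
      using Sx0 Sy0 by (rule max_powr_le)
  qed auto
  finally have "lp_norm p (\<lambda>i. x i + y i) \<le> 2 * (2 * (Sx powr (1/p) + Sy powr (1/p)))" by simp
  then show ?thesis using sxy by (simp add: lp_space_def lp_norm_def Sx_def Sy_def)
qed

lemma lp_space_truncation:
  assumes p: "1 \<le> p" and x: "x \<in> lp_space p" and e: "0 < e"
  shows "\<exists>F. finite F \<and> lp_norm p (\<lambda>i. if i \<in> F then 0 else x i) < e"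
proof -
  define f where "f = (\<lambda>i. norm (x i) powr p)"
  have sf: "f summable_on UNIV" using x by (simp add: lp_space_def f_def)
  have "0 < (e/2) powr p" using e by simp
  then obtain F where F: "finite F" "dist (sum f F) (infsum f UNIV) \<le> (e/2) powr p"
    using infsum_finite_approximation[OF sf] by blast
  have "infsum (\<lambda>i. norm (if i \<in> F then 0 else x i) powr p) UNIV = infsum f (UNIV - F)"
    by (rule infsum_cong_neutral) (auto simp: f_def)
  also have "\<dots> = infsum f UNIV - infsum f F"
    using F(1) sf by (intro infsum_Diff) auto
  also have "\<dots> \<le> (e/2) powr p" using F by (simp add: dist_real_def)
  finally have "lp_norm p (\<lambda>i. if i \<in> F then 0 else x i) \<le> ((e/2) powr p) powr (1/p)"
    unfolding lp_norm_def using p by (intro powr_mono2) (auto intro: lp_sum_nonneg)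
  also have "\<dots> = e/2" using e p by (simp add: powr_powr)
  finally show ?thesis using F e by (intro exI[of _ F]) auto
qed

lemma lp_space_l1:
  assumes p: "1 \<le> p" and \<beta>: "inj \<beta>" and vanish: "\<And>j. j \<notin> range \<beta> \<Longrightarrow> x j = 0"
    and sum: "summable (\<lambda>k. norm (x (\<beta> k)))"
  shows "x \<in> lp_space p \<and> lp_norm p x \<le> (\<Sum>k. norm (x (\<beta> k)))"
proof -
  define S where "S = (\<Sum>k. norm (x (\<beta> k)))"
  define f where "f = (\<lambda>i. norm (x i) powr p)"
  have S0: "0 \<le> S" unfolding S_def using sum by (simp add: suminf_nonneg)
  have le_S: "norm (x j) \<le> S" for j
  proof (cases "j \<in> range \<beta>")
    case True
    then obtain k where "j = \<beta> k" by auto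
    then show ?thesis using sum_le_suminf[OF sum, of "{k}"] by (simp add: S_def)
  qed (use vanish S0 in auto)
  have f_le: "f j \<le> S powr (p - 1) * norm (x j)" for j
  proof -
    have "f j = norm (x j) * norm (x j) powr (p - 1)"
      using powr_mult_base[of "norm (x j)" "p - 1"] by (simp add: f_def)
    also have "\<dots> \<le> norm (x j) * S powr (p - 1)"
      using le_S p by (intro mult_left_mono powr_mono2) auto
    finally show ?thesis by (simp add: mult.commute)
  qed
  have g: "((\<lambda>k. norm (x (\<beta> k))) has_sum S) UNIV"
    unfolding S_def using sum by (intro norm_summable_imp_has_sum) (auto intro: summable_sums)
  have sc: "(\<lambda>k. S powr (p - 1) * norm (x (\<beta> k))) summable_on UNIV"
    using g by (intro summable_on_cmult_right) (auto simp: summable_on_def)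
  have sf\<beta>: "(f \<circ> \<beta>) summable_on UNIV"
    by (rule summable_on_comparison_test[OF sc]) (use f_le in \<open>auto simp: f_def\<close>)
  have "f summable_on range \<beta>" using summable_on_reindex[of \<beta> UNIV f] \<beta> sf\<beta> by simp
  moreover have "f summable_on range \<beta> \<longleftrightarrow> f summable_on UNIV"
    by (rule summable_on_cong_neutral) (use vanish in \<open>auto simp: f_def\<close>)
  ultimately have sf: "f summable_on UNIV" by simp
  have "infsum f UNIV = infsum f (range \<beta>)"
    by (rule infsum_cong_neutral) (use vanish in \<open>auto simp: f_def\<close>)
  also have "\<dots> = infsum (f \<circ> \<beta>) UNIV" using infsum_reindex[of \<beta> UNIV f] \<beta> by simp
  also have "\<dots> \<le> infsum (\<lambda>k. S powr (p - 1) * norm (x (\<beta> k))) UNIV"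
    using sf\<beta> sc f_le by (intro infsum_mono) auto
  also have "\<dots> = S powr (p - 1) * S"
    using g by (simp add: infsum_cmult_right' infsumI)
  also have "\<dots> = S powr p"
    using powr_mult_base[of S "p - 1"] S0 by (simp add: mult.commute)
  finally have "lp_norm p x \<le> (S powr p) powr (1/p)"
    unfolding lp_norm_def f_def using p by (intro powr_mono2) (auto intro: lp_sum_nonneg)
  also have "\<dots> = S" using S0 p by (simp add: powr_powr)
  finally show ?thesis using sf by (simp add: lp_space_def f_def S_def)
qed

lemma sequence_space_lp:
  assumes p: "1 \<le> p"
  shows "sequence_space (lp_space p :: (int \<Rightarrow> 'a::real_normed_field) set) (lp_norm p) 4"
proof unfold_locales
  fix x y :: "int \<Rightarrow> 'a" and i s :: int and c e :: real and \<beta> :: "nat \<Rightarrow> int"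
  show "x \<in> lp_space p \<Longrightarrow> norm (x i) \<le> lp_norm p x" using p by (rule norm_le_lp_norm)
  show "x \<in> lp_space p \<Longrightarrow> y \<in> lp_space p \<Longrightarrow> (\<lambda>i. x i + y i) \<in> lp_space p"
    and "x \<in> lp_space p \<Longrightarrow> y \<in> lp_space p \<Longrightarrow>
      lp_norm p (\<lambda>i. x i + y i) \<le> 4 * (lp_norm p x + lp_norm p y)"
    using lp_space_add[OF p] by blast+
  show "y \<in> lp_space p \<Longrightarrow> 0 \<le> c \<Longrightarrow> (\<And>i. norm (x i) \<le> c * norm (y (i + s))) \<Longrightarrow> x \<in> lp_space p"
    and "y \<in> lp_space p \<Longrightarrow> 0 \<le> c \<Longrightarrow> (\<And>i. norm (x i) \<le> c * norm (y (i + s))) \<Longrightarrow>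
      lp_norm p x \<le> c * lp_norm p y"
    using lp_space_dominated[OF p] by blast+
  show "x \<in> lp_space p \<Longrightarrow> 0 < e \<Longrightarrow> \<exists>F. finite F \<and> lp_norm p (\<lambda>i. if i \<in> F then 0 else x i) < e"
    using p by (rule lp_space_truncation)
  show "inj \<beta> \<Longrightarrow> (\<And>j. j \<notin> range \<beta> \<Longrightarrow> x j = 0) \<Longrightarrow> summable (\<lambda>k. norm (x (\<beta> k))) \<Longrightarrow>
      x \<in> lp_space p"
    and "inj \<beta> \<Longrightarrow> (\<And>j. j \<notin> range \<beta> \<Longrightarrow> x j = 0) \<Longrightarrow> summable (\<lambda>k. norm (x (\<beta> k))) \<Longrightarrow>
      lp_norm p x \<le> (\<Sum>k. norm (x (\<beta> k)))"
    using lp_space_l1[OF p] by blast+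
qed simp

section \<open>Weighted backward shifts\<close>

text \<open>wprod w b n is the factor by which the n-th power of the shift scales the basis vector at b
  (moving it to b - n).\<close>

definition wprod :: "(int \<Rightarrow> 'a::real_normed_field) \<Rightarrow> int \<Rightarrow> nat \<Rightarrow> real" where
  "wprod w b n = (\<Prod>t<n. norm (w (b - int t)))"

lemma wprod_add: "wprod w b (n + m) = wprod w b n * wprod w (b - int n) m"
  by (induction m) (simp_all add: wprod_def algebra_simps)

lemma prod_atLeastAtMost_eq_wprod: "(\<Prod>j\<in>{b - int n + 1..b}. norm (w j)) = wprod w b n"
proof -
  have "{b - int n + 1..b} = (\<lambda>t. b - int t) ` {..<n}"
  proof (intro equalityI subsetI)
    fix j assume "j \<in> {b - int n + 1..b}"
    then show "j \<in> (\<lambda>t. b - int t) ` {..<n}" by (intro image_eqI[of _ _ "nat (b - j)"]) auto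
  qed auto
  moreover have "inj_on (\<lambda>t. b - int t) {..<n}" by (auto simp: inj_on_def)
  ultimately show ?thesis by (simp add: wprod_def prod.reindex)
qed

lemma bw_shift_pow_apply: "(bw_shift w ^^ n) x i = (\<Prod>t<n. w (i + int n - int t)) * x (i + int n)"
proof (induction n arbitrary: x)
  case (Suc n)
  have prod_eq: "(\<Prod>t<n. w (i + int n - int t)) * w (i + int n + 1)
      = (\<Prod>t<Suc n. w (i + int (Suc n) - int t))"
    by (subst prod.lessThan_Suc_shift) (simp add: algebra_simps)
  have x_eq: "x (i + int n + 1) = x (i + int (Suc n))" by (simp add: ac_simps)
  have "(bw_shift w ^^ Suc n) x i
      = (\<Prod>t<n. w (i + int n - int t)) * w (i + int n + 1) * x (i + int n + 1)"
    by (simp only: funpow_Suc_right comp_apply Suc.IH) (simp add: bw_shift_def mult.assoc)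
  then show ?case by (simp only: prod_eq x_eq)
qed simp

lemma norm_bw_shift_pow: "norm ((bw_shift w ^^ n) x i) = wprod w (i + int n) n * norm (x (i + int n))"
  by (simp add: bw_shift_pow_apply wprod_def norm_mult prod_norm[symmetric])

lemma bw_shift_pow_diff:
  "(bw_shift w ^^ n) (\<lambda>j. x j - y j) = (\<lambda>i. (bw_shift w ^^ n) x i - (bw_shift w ^^ n) y i)"
  by (rule ext) (simp add: bw_shift_pow_apply algebra_simps)

lemma bw_shift_pow_add_scale:
  "(bw_shift w ^^ n) (\<lambda>j. x j + c * y j) = (\<lambda>i. (bw_shift w ^^ n) x i + c * (bw_shift w ^^ n) y i)"
  by (rule ext) (simp add: bw_shift_pow_apply algebra_simps)

lemma bw_shift_pow_combination:
  "(bw_shift w ^^ n) (\<lambda>j. \<Sum>i<m. c i * g i j) = (\<lambda>j. \<Sum>i<m. c i * (bw_shift w ^^ n) (g i) j)"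
  by (rule ext) (simp add: bw_shift_pow_apply sum_distrib_left mult_ac)

locale weighted_shift = sequence_space X N K
  for X :: "(int \<Rightarrow> 'a::real_normed_field) set" and N K +
  fixes w :: "int \<Rightarrow> 'a" and B :: real
  assumes one_le_B: "1 \<le> B" and norm_w_le: "norm (w j) \<le> B" and w_nonzero: "w j \<noteq> 0"
begin

abbreviation T where "T \<equiv> bw_shift w"

lemma wprod_pos: "0 < wprod w b n"
  unfolding wprod_def using w_nonzero by (simp add: prod_pos)

lemma wprod_le_pow: "wprod w b n \<le> B ^ n"
proof -
  have "wprod w b n \<le> (\<Prod>t<n. B)" unfolding wprod_def by (intro prod_mono) (simp add: norm_w_le)
  then show ?thesis by simp
qed

lemma N_orbit_le:
  assumes bound: "\<And>b. wprod w b n \<le> C" and "x \<in> X"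
  shows "(T ^^ n) x \<in> X" and "N ((T ^^ n) x) \<le> C * N x"
proof -
  have C: "0 \<le> C" using wprod_pos[of 0 n] bound[of 0] by simp
  have "norm ((T ^^ n) x i) \<le> C * norm (x (i + int n))" for i
    unfolding norm_bw_shift_pow by (intro mult_right_mono bound) simp
  then show "(T ^^ n) x \<in> X" and "N ((T ^^ n) x) \<le> C * N x"
    using dominated_mem N_dominated_le assms(2) C by blast+
qed

lemma orbit_mem: "x \<in> X \<Longrightarrow> (T ^^ n) x \<in> X"
  using N_orbit_le(1)[OF wprod_le_pow] .

lemma wprod_mult_norm_le_N_orbit: "x \<in> X \<Longrightarrow> wprod w b n * norm (x b) \<le> N ((T ^^ n) x)"
  using norm_le_N[OF orbit_mem, of x n "b - int n"] by (simp add: norm_bw_shift_pow)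

lemma N_orbit_pos: "x \<in> X \<Longrightarrow> x \<noteq> (\<lambda>i. 0) \<Longrightarrow> 0 < N ((T ^^ n) x)"
proof -
  assume "x \<in> X" "x \<noteq> (\<lambda>i. 0)"
  then obtain b where "x b \<noteq> 0" by auto
  then have "0 < wprod w b n * norm (x b)" using wprod_pos by simp
  then show ?thesis using wprod_mult_norm_le_N_orbit[OF \<open>x \<in> X\<close>] by (rule less_le_trans)
qed

lemma N_orbit_unit_seq_le: "N ((T ^^ n) (unit_seq m)) \<le> wprod w m n * N (unit_seq m)"
proof (rule N_dominated_le[OF unit_seq_mem])
  show "norm ((T ^^ n) (unit_seq m) i) \<le> wprod w m n * norm (unit_seq m (i + int n) :: 'a)" for i
    by (cases "i + int n = m") (simp_all add: norm_bw_shift_pow unit_seq_def)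
qed (simp add: wprod_pos less_imp_le)

lemma irregular_vectorI:
  assumes "x \<in> X" "x \<noteq> (\<lambda>i. 0)"
    and "(\<lambda>k. N ((T ^^ r k) x)) \<longlonglongrightarrow> 0" "filterlim (\<lambda>k. N ((T ^^ s k) x)) at_top sequentially"
  shows "irregular_vector N T x"
  unfolding irregular_vector_def
proof
  show "liminf (\<lambda>n. ereal (N ((T ^^ n) x))) = 0"
    using assms N_orbit_pos tendsto_0_along_imp_frequently_less
    by (subst liminf_ereal_eq_0_iff) (auto simp: less_imp_le)
  show "limsup (\<lambda>n. ereal (N ((T ^^ n) x))) = \<infinity>"
    using assms(4) filterlim_at_top_along_imp_frequently_greater
    by (subst limsup_ereal_eq_infinity_iff) auto
qed

lemma irregular_diff_imp_li_yorke_pair: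
  "irregular_vector N T (\<lambda>j. x j - y j) \<Longrightarrow> li_yorke_pair N T x y"
  unfolding irregular_vector_def li_yorke_pair_def bw_shift_pow_diff by simp

lemma wprod_le_shifted:
  assumes "\<bar>a - b\<bar> \<le> int \<beta>"
  shows "\<exists>C>0. \<forall>n\<ge>\<beta>. wprod w a (n + \<beta>) \<le> C * wprod w b n"
proof (cases "b \<le> a")
  case True
  define k where "k = nat (a - b)"
  have k: "a - int k = b" "k \<le> \<beta>" using True assms by (auto simp: k_def)
  show ?thesis
  proof (intro exI[of _ "wprod w a k * B ^ (\<beta> - k)"] conjI allI impI)
    show "0 < wprod w a k * B ^ (\<beta> - k)" using wprod_pos one_le_B by simp
    fix n assume "\<beta> \<le> n"
    have "wprod w a (n + \<beta>) = wprod w a ((k + n) + (\<beta> - k))" using k by simp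
    also have "\<dots> = wprod w a k * wprod w b n * wprod w (a - int (k + n)) (\<beta> - k)"
      by (simp only: wprod_add k(1))
    also have "\<dots> \<le> wprod w a k * wprod w b n * B ^ (\<beta> - k)"
      using wprod_pos by (intro mult_left_mono wprod_le_pow) (simp add: less_imp_le)
    finally show "wprod w a (n + \<beta>) \<le> wprod w a k * B ^ (\<beta> - k) * wprod w b n"
      by (simp add: ac_simps)
  qed
next
  case False
  define k where "k = nat (b - a)"
  have k: "b - int k = a" "k \<le> \<beta>" using False assms by (auto simp: k_def)
  show ?thesis
  proof (intro exI[of _ "B ^ (\<beta> + k) / wprod w b k"] conjI allI impI)
    show "0 < B ^ (\<beta> + k) / wprod w b k" using wprod_pos one_le_B by simp
    fix n assume "\<beta> \<le> n"
    have "wprod w b n = wprod w b (k + (n - k))" using k \<open>\<beta> \<le> n\<close> by simp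
    also have "\<dots> = wprod w b k * wprod w a (n - k)" by (simp only: wprod_add k(1))
    finally have a_eq: "wprod w a (n - k) = wprod w b n / wprod w b k"
      using wprod_pos[of b k] by (simp add: field_simps)
    have "wprod w a (n + \<beta>) = wprod w a ((n - k) + (\<beta> + k))" using k \<open>\<beta> \<le> n\<close> by simp
    also have "\<dots> = wprod w a (n - k) * wprod w (a - int (n - k)) (\<beta> + k)" by (rule wprod_add)
    also have "\<dots> \<le> wprod w a (n - k) * B ^ (\<beta> + k)"
      using wprod_pos by (intro mult_left_mono wprod_le_pow) (simp add: less_imp_le)
    also have "\<dots> = B ^ (\<beta> + k) / wprod w b k * wprod w b n"
      unfolding a_eq by (simp only: times_divide_eq_left divide_inverse mult_ac)
    finally show "wprod w a (n + \<beta>) \<le> B ^ (\<beta> + k) / wprod w b k * wprod w b n" .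
  qed
qed

lemma frequently_all_wprod_le:
  assumes small: "\<And>e. 0 < e \<Longrightarrow> \<exists>\<^sub>F n in sequentially. wprod w b n < e"
    and "finite A" "0 < e"
  shows "\<exists>\<^sub>F n in sequentially. \<forall>a\<in>A. wprod w a n \<le> e"
proof -
  obtain \<beta> where \<beta>: "\<forall>m\<in>(\<lambda>a. nat \<bar>a - b\<bar>) ` A. m \<le> \<beta>"
    using \<open>finite A\<close> finite_nat_set_iff_bounded_le by blast
  have "\<forall>a\<in>A. \<exists>C>0. \<forall>n\<ge>\<beta>. wprod w a (n + \<beta>) \<le> C * wprod w b n"
    using \<beta> by (intro ballI wprod_le_shifted) auto
  then obtain C where C: "\<And>a. a \<in> A \<Longrightarrow> 0 < C a \<and> (\<forall>n\<ge>\<beta>. wprod w a (n + \<beta>) \<le> C a * wprod w b n)"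
    by metis
  define D where "D = 1 + (\<Sum>a\<in>A. C a)"
  have sum_C: "0 \<le> (\<Sum>a\<in>A. C a)" using C by (auto intro: sum_nonneg less_imp_le)
  then have D: "0 < D" by (simp add: D_def)
  have C_le_D: "C a \<le> D" if "a \<in> A" for a
    using member_le_sum[of a A C] C \<open>finite A\<close> that by (force simp: D_def less_imp_le)
  show ?thesis
    unfolding frequently_sequentially
  proof
    fix N0
    have "\<forall>M. \<exists>n\<ge>M. wprod w b n < e / D"
      using small[of "e / D"] \<open>0 < e\<close> D unfolding frequently_sequentially by simp
    then obtain n where n: "max N0 \<beta> \<le> n" "wprod w b n < e / D" by blast
    have "wprod w a (n + \<beta>) \<le> e" if "a \<in> A" for a
    proof -
      have "wprod w a (n + \<beta>) \<le> C a * wprod w b n" using C[OF that] n by auto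
      also have "\<dots> \<le> D * (e / D)"
        using C_le_D[OF that] n(2) C[OF that] wprod_pos
        by (intro mult_mono) (auto simp: less_imp_le)
      finally show ?thesis using D by simp
    qed
    then show "\<exists>m\<ge>N0. \<forall>a\<in>A. wprod w a m \<le> e" using n by (intro exI[of _ "n + \<beta>"]) auto
  qed
qed

section \<open>Necessity of the weight conditions\<close>

lemma orbit_zero: "(T ^^ n) (\<lambda>i. 0) = (\<lambda>i. 0)"
  by (rule ext) (simp add: bw_shift_pow_apply)

lemma liminf_orbit_imp_liminf_wprod:
  assumes v: "v \<in> X" "v \<noteq> (\<lambda>i. 0)" and lim: "liminf (\<lambda>n. ereal (N ((T ^^ n) v))) = 0"
  shows "liminf (\<lambda>n. ereal (wprod w 0 n)) = 0"
proof -
  obtain m where m: "v m \<noteq> 0" using v(2) by auto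
  have orbit_small: "\<forall>e>0. \<exists>\<^sub>F n in sequentially. N ((T ^^ n) v) < e"
    using lim liminf_ereal_eq_0_iff[of "\<lambda>n. N ((T ^^ n) v)"] N_nonneg[OF orbit_mem[OF v(1)]] by simp
  have small_m: "\<exists>\<^sub>F n in sequentially. wprod w m n < e" if "0 < e" for e
  proof -
    have "\<exists>\<^sub>F n in sequentially. N ((T ^^ n) v) < e * norm (v m)" using orbit_small that m by simp
    then show ?thesis
    proof (rule frequently_elim1)
      fix n assume "N ((T ^^ n) v) < e * norm (v m)"
      then have "wprod w m n * norm (v m) < e * norm (v m)"
        using wprod_mult_norm_le_N_orbit[OF v(1), of m n] by linarith
      then show "wprod w m n < e" using m by simp
    qed
  qed
  have "\<exists>\<^sub>F n in sequentially. wprod w 0 n < e" if "0 < e" for e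
  proof -
    have "\<exists>\<^sub>F n in sequentially. \<forall>a\<in>{0}. wprod w a n \<le> e / 2"
      using that by (intro frequently_all_wprod_le[OF small_m]) auto
    then show ?thesis by (rule frequently_elim1) (use that in auto)
  qed
  then show ?thesis using liminf_ereal_eq_0_iff[of "wprod w 0"] wprod_pos less_imp_le by blast
qed

lemma bounded_wprod_imp_limsup_orbit_le_0:
  assumes bound: "\<And>b n. wprod w b n \<le> C" and v: "v \<in> X"
    and lim: "liminf (\<lambda>n. ereal (N ((T ^^ n) v))) = 0"
  shows "limsup (\<lambda>n. ereal (N ((T ^^ n) v))) \<le> 0"
proof (rule ereal_le_epsilon2)
  fix z :: real assume "0 < z"
  have C: "0 < C" using wprod_pos[of 0 0] bound[of 0 0] by linarith
  have "\<exists>\<^sub>F n in sequentially. N ((T ^^ n) v) < z / C"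
    using lim liminf_ereal_eq_0_iff[of "\<lambda>n. N ((T ^^ n) v)"] N_nonneg[OF orbit_mem[OF v]] C \<open>0 < z\<close>
    by simp
  then obtain n0 where n0: "N ((T ^^ n0) v) < z / C" by (rule frequentlyE)
  have "\<forall>\<^sub>F n in sequentially. ereal (N ((T ^^ n) v)) \<le> ereal z"
    unfolding eventually_sequentially
  proof (intro exI allI impI)
    fix n assume "n0 \<le> n"
    then have "(T ^^ n) v = (T ^^ (n - n0)) ((T ^^ n0) v)"
      by (metis funpow_add le_add_diff_inverse2 comp_apply)
    then have "N ((T ^^ n) v) \<le> C * N ((T ^^ n0) v)"
      using N_orbit_le(2)[OF bound orbit_mem[OF v]] by simp
    also have "\<dots> \<le> z" using n0 C by (simp add: pos_less_divide_eq mult.commute less_imp_le)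
    finally show "ereal (N ((T ^^ n) v)) \<le> ereal z" by simp
  qed
  then have "limsup (\<lambda>n. ereal (N ((T ^^ n) v))) \<le> ereal z" by (rule Limsup_bounded)
  then show "limsup (\<lambda>n. ereal (N ((T ^^ n) v))) \<le> 0 + ereal z" by simp
qed

lemma li_yorke_pair_imp_weight_conditions:
  assumes "x \<in> X" "y \<in> X" "li_yorke_pair N T x y"
  shows "liminf (\<lambda>n. ereal (wprod w 0 n)) = 0 \<and> (\<forall>H. \<exists>b n. H < wprod w b n)"
proof -
  define v where "v = (\<lambda>j. x j - y j)"
  have v: "v \<in> X" unfolding v_def using assms(1,2) by (rule diff_mem)
  have liminf: "liminf (\<lambda>n. ereal (N ((T ^^ n) v))) = 0"
    and limsup: "0 < limsup (\<lambda>n. ereal (N ((T ^^ n) v)))"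
    using assms(3) unfolding li_yorke_pair_def v_def bw_shift_pow_diff by auto
  have "v \<noteq> (\<lambda>i. 0)"
  proof
    assume "v = (\<lambda>i. 0)"
    then have "limsup (\<lambda>n. ereal (N ((T ^^ n) v))) = 0" by (simp add: orbit_zero N_zero Limsup_const)
    with limsup show False by simp
  qed
  show ?thesis
  proof
    show "liminf (\<lambda>n. ereal (wprod w 0 n)) = 0"
      using v \<open>v \<noteq> (\<lambda>i. 0)\<close> liminf by (rule liminf_orbit_imp_liminf_wprod)
    show "\<forall>H. \<exists>b n. H < wprod w b n"
    proof (rule ccontr)
      assume "\<not> (\<forall>H. \<exists>b n. H < wprod w b n)"
      then obtain H where "\<And>b n. wprod w b n \<le> H" by (auto simp: not_less)
      from bounded_wprod_imp_limsup_orbit_le_0[OF this v liminf] limsup show False by simp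
    qed
  qed
qed

section \<open>A dense irregular manifold\<close>

lemma exists_large_wprod_avoiding:
  assumes large: "\<And>H. \<exists>b n. H < wprod w b n" and A: "finite A"
  shows "\<exists>b n. b \<notin> A \<and> H \<le> wprod w b n"
proof -
  define c where "c = card A"
  obtain b0 n0 where big: "max H 1 * B ^ c < wprod w b0 n0" using large by blast
  have B_c: "0 < B ^ c" "B ^ c \<le> max H 1 * B ^ c" using one_le_B by simp_all
  have "c \<le> n0"
  proof (rule ccontr)
    assume "\<not> c \<le> n0"
    then have "B ^ n0 \<le> B ^ c" using one_le_B by (intro power_increasing) auto
    then show False using big B_c wprod_le_pow[of b0 n0] by linarith
  qed
  \<comment> \<open>pigeonhole: the c + 1 points b0 - s with s \<le> c cannot all lie in A\<close>
  have "\<not> (\<lambda>s. b0 - int s) ` {..c} \<subseteq> A"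
  proof
    assume "(\<lambda>s. b0 - int s) ` {..c} \<subseteq> A"
    moreover have "inj_on (\<lambda>s. b0 - int s) {..c}" by (auto simp: inj_on_def)
    ultimately have "card {..c} \<le> card A" using card_inj_on_le A by blast
    then show False by (simp add: c_def)
  qed
  then obtain s where s: "s \<le> c" "b0 - int s \<notin> A" by auto
  have "wprod w b0 n0 = wprod w b0 s * wprod w (b0 - int s) (n0 - s)"
    using wprod_add[of w b0 s "n0 - s"] s \<open>c \<le> n0\<close> by simp
  also have "\<dots> \<le> B ^ c * wprod w (b0 - int s) (n0 - s)"
  proof (rule mult_right_mono)
    show "wprod w b0 s \<le> B ^ c"
      using wprod_le_pow[of b0 s] power_increasing[OF s(1) one_le_B] by linarith
  qed (simp add: less_imp_le wprod_pos)
  finally have "B ^ c * max H 1 < B ^ c * wprod w (b0 - int s) (n0 - s)"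
    using big by (simp add: mult.commute)
  then have "max H 1 < wprod w (b0 - int s) (n0 - s)" using B_c(1) by simp
  then show ?thesis using s by (intro exI[of _ "b0 - int s"] exI[of _ "n0 - s"]) auto
qed

lemma exists_small_and_large_wprod:
  assumes small: "\<And>e. 0 < e \<Longrightarrow> \<exists>\<^sub>F n in sequentially. wprod w 0 n < e"
    and large: "\<And>H. \<exists>b n. H < wprod w b n" and "0 < e"
  shows "\<exists>p q b. p_min < p \<and> R < \<bar>b\<bar> \<and> (\<forall>c. \<bar>c\<bar> \<le> R \<longrightarrow> wprod w c p \<le> e) \<and> H * B ^ p \<le> wprod w b q"
proof -
  have "\<exists>\<^sub>F n in sequentially. \<forall>c\<in>{-R..R}. wprod w c n \<le> e"
    using small \<open>0 < e\<close> by (intro frequently_all_wprod_le) auto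
  then have "\<forall>M. \<exists>n\<ge>M. \<forall>c\<in>{-R..R}. wprod w c n \<le> e" unfolding frequently_sequentially .
  then obtain p where p: "Suc p_min \<le> p" "\<forall>c\<in>{-R..R}. wprod w c p \<le> e" by blast
  obtain b q where bq: "b \<notin> {-R..R}" "H * B ^ p \<le> wprod w b q"
    using exists_large_wprod_avoiding[OF large, of "{-R..R}"] by blast
  have "p_min < p" "\<forall>c. \<bar>c\<bar> \<le> R \<longrightarrow> wprod w c p \<le> e" using p by (auto simp: abs_le_iff)
  moreover have "R < \<bar>b\<bar>" using bq(1) by (smt (verit) atLeastAtMost_iff)
  ultimately show ?thesis using bq(2) by blast
qed

end

locale irregular_construction = weighted_shift X N K w B
  for X :: "(int \<Rightarrow> 'a::real_normed_field) set" and N K w B +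
  fixes p q :: "nat \<Rightarrow> nat" and b :: "nat \<Rightarrow> int"
  assumes mono_p: "mono p"
    and inj_b: "inj b"
    and wprod_b_p_le: "j < l \<Longrightarrow> wprod w (b j) (p l) \<le> 1 / (real l + 1)^2"
    and wprod_p_le: "\<bar>m\<bar> \<le> int l \<Longrightarrow> wprod w m (p l) \<le> 1 / (real l + 1)^2"
    and wprod_b_q_ge: "(real k + 1) ^ (k + 1) * 2 ^ (k + 1) * B ^ p k \<le> wprod w (b k) (q k)"
begin

text \<open>The factor B ^ p k absorbs the growth of the orbit up to time p k, and wprod_b_q_ge is
  tuned so that wprod w (b k) (q k) * bump_weight k \<ge> (k + 1) ^ (k + 1).\<close>

definition bump_weight :: "nat \<Rightarrow> real" where
  "bump_weight k = 1 / (2 ^ (k + 1) * B ^ p k)"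

definition bump_coeff :: "nat \<Rightarrow> nat \<Rightarrow> real" where
  "bump_coeff i k = bump_weight k * (1 / (real k + 1)) ^ i"

definition bump :: "nat \<Rightarrow> int \<Rightarrow> 'a" where
  "bump i j = of_real (if j \<in> range b then bump_coeff i (inv b j) else 0)"

definition gen_site :: "nat \<Rightarrow> int" where
  "gen_site i = fst (from_nat i :: int \<times> nat)"

definition gen_scale :: "nat \<Rightarrow> real" where
  "gen_scale i = 1 / (real (snd (from_nat i :: int \<times> nat)) + 1)"

text \<open>Since i \<mapsto> (gen_site i, -) enumerates \<int> \<times> \<nat>, every basis vector is a limit of generators.\<close>

definition gen :: "nat \<Rightarrow> int \<Rightarrow> 'a" where
  "gen i = (\<lambda>j. unit_seq (gen_site i) j + of_real (gen_scale i) * bump i j)"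

abbreviation M where "M \<equiv> combinations gen"

lemma bump_weight_pos: "0 < bump_weight k"
  using one_le_B by (simp add: bump_weight_def)

lemma bump_weight_le: "bump_weight k \<le> (1/2) ^ Suc k"
proof -
  have "bump_weight k = (1/2) ^ Suc k / B ^ p k" by (simp add: bump_weight_def power_one_over)
  also have "\<dots> \<le> (1/2) ^ Suc k" using one_le_B by (simp add: divide_le_eq)
  finally show ?thesis .
qed

lemma bump_coeff_pos: "0 < bump_coeff i k"
  using bump_weight_pos by (simp add: bump_coeff_def)

lemma bump_coeff_le_weight: "bump_coeff i k \<le> bump_weight k"
  using bump_weight_pos by (simp add: bump_coeff_def mult_left_le power_le_one)

lemma bump_at_b [simp]: "bump i (b k) = of_real (bump_coeff i k)"
  using inj_b by (simp add: bump_def)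

lemma bump_outside: "j \<notin> range b \<Longrightarrow> bump i j = 0"
  by (simp add: bump_def)

lemma bump_coeff_summable: "summable (bump_coeff i)" and bump_coeff_sum_le: "(\<Sum>k. bump_coeff i k) \<le> 1"
proof -
  have le: "bump_coeff i k \<le> (1/2) ^ Suc k" for k
    using bump_coeff_le_weight bump_weight_le order.trans by blast
  show "summable (bump_coeff i)"
    using le bump_coeff_pos by (intro summable_comparison_test'[OF sums_summable[OF power_half_series]])
      (auto simp: less_imp_le)
  then show "(\<Sum>k. bump_coeff i k) \<le> 1"
    using suminf_le[OF le _ sums_summable[OF power_half_series]] power_half_series by (simp add: sums_iff)
qed

lemma bump_mem: "bump i \<in> X" and N_bump_le: "N (bump i) \<le> 1"
proof -
  have norm_eq: "(\<lambda>k. norm (bump i (b k))) = bump_coeff i"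
    using bump_coeff_pos by (auto simp: less_imp_le)
  have sum: "summable (\<lambda>k. norm (bump i (b k)))" unfolding norm_eq by (rule bump_coeff_summable)
  show "bump i \<in> X" using inj_b bump_outside sum by (rule l1_mem)
  have "N (bump i) \<le> (\<Sum>k. norm (bump i (b k)))" using inj_b bump_outside sum by (rule N_le_l1)
  then show "N (bump i) \<le> 1" using bump_coeff_sum_le[of i] unfolding norm_eq by simp
qed

lemma gen_scale_pos: "0 < gen_scale i"
  by (simp add: gen_scale_def)

lemma norm_gen_scale_le: "norm (of_real (gen_scale i) :: 'a) \<le> 1"
proof -
  have "gen_scale i \<le> 1" by (simp add: gen_scale_def)
  then show ?thesis using gen_scale_pos[of i] by simp
qed

lemma gen_mem: "gen i \<in> X"
  unfolding gen_def by (intro add_mem unit_seq_mem scale_mem bump_mem)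

lemma gen_in_M: "gen i \<in> M"
  by (rule generator_in_combinations)

lemma M_subset: "M \<subseteq> X"
  using seq_subspace_combinations[OF gen_mem] by (simp add: seq_subspace_def)

lemma norm_orbit_bump_at: "norm ((T ^^ n) (bump i) (b k - int n)) = wprod w (b k) n * bump_coeff i k"
  using bump_coeff_pos[of i k] by (simp add: norm_bw_shift_pow)

lemma orbit_bump_outside:
  assumes "j \<notin> range (\<lambda>k. b k - int n)" shows "(T ^^ n) (bump i) j = 0"
proof -
  have "j + int n \<notin> range b"
  proof
    assume "j + int n \<in> range b"
    then obtain k where "j = b k - int n" by (metis add_diff_cancel_right' rangeE)
    with assms show False by auto
  qed
  then show ?thesis by (simp add: bw_shift_pow_apply bump_outside)
qed

lemma wprod_bump_coeff_head: "k < l \<Longrightarrow> wprod w (b k) (p l) * bump_coeff i k \<le> 1 / (real l + 1)^2"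
proof -
  assume "k < l"
  have "(1/2::real) ^ Suc k \<le> 1" by (rule power_le_one) auto
  then have "bump_coeff i k \<le> 1" using bump_coeff_le_weight[of i k] bump_weight_le[of k] by linarith
  then have "wprod w (b k) (p l) * bump_coeff i k \<le> wprod w (b k) (p l)"
    using wprod_pos by (simp add: mult_left_le)
  also have "\<dots> \<le> 1 / (real l + 1)^2" using wprod_b_p_le \<open>k < l\<close> .
  finally show ?thesis .
qed

lemma wprod_bump_coeff_le: "l \<le> k \<Longrightarrow> wprod w (b k) (p l) * bump_coeff i k \<le> (1/2) ^ Suc k"
proof -
  assume "l \<le> k"
  have "B ^ p l \<le> B ^ p k" using one_le_B mono_p \<open>l \<le> k\<close> by (intro power_increasing) (auto dest: monoD)
  then have "wprod w (b k) (p l) \<le> B ^ p k" using wprod_le_pow order.trans by blast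
  then have "wprod w (b k) (p l) * bump_coeff i k \<le> B ^ p k * bump_weight k"
    using bump_coeff_le_weight bump_coeff_pos wprod_pos one_le_B by (intro mult_mono) (auto simp: less_imp_le)
  also have "\<dots> = (1/2) ^ Suc k" using one_le_B by (simp add: bump_weight_def power_one_over)
  finally show ?thesis .
qed

lemma orbit_bump_sum:
  shows "summable (\<lambda>k. wprod w (b k) (p l) * bump_coeff i k)"
    and "(\<Sum>k. wprod w (b k) (p l) * bump_coeff i k) \<le> 1 / (real l + 1) + (1/2) ^ l"
proof -
  define h where "h = (\<lambda>k. wprod w (b k) (p l) * bump_coeff i k)"
  have h_nonneg: "0 \<le> h k" for k using wprod_pos bump_coeff_pos by (simp add: h_def less_imp_le)
  have tail_le: "h (k + l) \<le> (1/2) ^ l * (1/2) ^ Suc k" for k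
    using wprod_bump_coeff_le[of l "k + l"] by (simp add: h_def power_add ac_simps)
  have sum_tail: "summable (\<lambda>k. h (k + l))"
    using tail_le h_nonneg
    by (intro summable_comparison_test'[OF summable_mult[OF sums_summable[OF power_half_series]]]) auto
  then have "summable h" by (simp add: summable_iff_shift)
  then show summable_h: "summable (\<lambda>k. wprod w (b k) (p l) * bump_coeff i k)" by (simp add: h_def)
  have "(\<Sum>k. h k) = (\<Sum>k. h (k + l)) + (\<Sum>k<l. h k)"
    using summable_h by (intro suminf_split_initial_segment) (simp add: h_def)
  also have "(\<Sum>k. h (k + l)) \<le> (\<Sum>k. (1/2) ^ l * (1/2::real) ^ Suc k)"
    by (intro suminf_le tail_le sum_tail summable_mult sums_summable[OF power_half_series])
  also have "\<dots> = (1/2) ^ l" using sums_mult[OF power_half_series, of "(1/2) ^ l"] by (simp add: sums_iff)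
  also have "(\<Sum>k<l. h k) \<le> (\<Sum>k<l. 1 / (real l + 1)^2)"
    using wprod_bump_coeff_head by (intro sum_mono) (simp add: h_def)
  also have "\<dots> = real l / (real l + 1)^2" by simp
  also have "\<dots> \<le> (real l + 1) / (real l + 1)^2" by (intro divide_right_mono) auto
  also have "\<dots> = 1 / (real l + 1)" by (simp add: power2_eq_square)
  finally show "(\<Sum>k. wprod w (b k) (p l) * bump_coeff i k) \<le> 1 / (real l + 1) + (1/2) ^ l"
    by (simp add: h_def add.commute)
qed

lemma N_orbit_bump_le: "N ((T ^^ p l) (bump i)) \<le> 1 / (real l + 1) + (1/2) ^ l"
proof -
  have inj: "inj (\<lambda>k. b k - int (p l))" using inj_b by (auto simp: inj_def)
  have norm_eq: "(\<lambda>k. norm ((T ^^ p l) (bump i) (b k - int (p l))))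
      = (\<lambda>k. wprod w (b k) (p l) * bump_coeff i k)"
    by (simp add: norm_orbit_bump_at)
  have "N ((T ^^ p l) (bump i)) \<le> (\<Sum>k. norm ((T ^^ p l) (bump i) (b k - int (p l))))"
    using inj orbit_bump_outside orbit_bump_sum(1)[of l i] unfolding norm_eq[symmetric] by (rule N_le_l1)
  then show ?thesis using orbit_bump_sum(2)[of l i] unfolding norm_eq by simp
qed

lemma tendsto_N_orbit_gen: "(\<lambda>l. N ((T ^^ p l) (gen i))) \<longlonglongrightarrow> 0"
proof (rule tendsto_sandwich)
  define Nu where "Nu = N (unit_seq (gen_site i) :: int \<Rightarrow> 'a)"
  show "\<forall>\<^sub>F l in sequentially. 0 \<le> N ((T ^^ p l) (gen i))"
    by (intro always_eventually allI N_nonneg orbit_mem gen_mem)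
  show "\<forall>\<^sub>F l in sequentially.
      N ((T ^^ p l) (gen i)) \<le> K * ((1 / (real l + 1))^2 * Nu + (1 / (real l + 1) + (1/2) ^ l))"
    using eventually_ge_at_top[of "nat \<bar>gen_site i\<bar>"]
  proof eventually_elim
    case (elim l)
    let ?u = "(T ^^ p l) (unit_seq (gen_site i))" and ?z = "(T ^^ p l) (bump i)"
    have mem: "?u \<in> X" "(\<lambda>j. of_real (gen_scale i) * ?z j) \<in> X"
      by (intro orbit_mem scale_mem unit_seq_mem bump_mem)+
    have "wprod w (gen_site i) (p l) \<le> (1 / (real l + 1))^2"
      unfolding power_one_over using elim by (intro wprod_p_le) (simp add: nat_le_iff)
    then have "wprod w (gen_site i) (p l) * Nu \<le> (1 / (real l + 1))^2 * Nu"
      using N_nonneg[OF unit_seq_mem] unfolding Nu_def by (rule mult_right_mono)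
    with N_orbit_unit_seq_le have u: "N ?u \<le> (1 / (real l + 1))^2 * Nu"
      unfolding Nu_def by (rule order.trans)
    have "N (\<lambda>j. of_real (gen_scale i) * ?z j) \<le> norm (of_real (gen_scale i) :: 'a) * N ?z"
      by (intro N_scale_le orbit_mem bump_mem)
    also have "\<dots> \<le> 1 * (1 / (real l + 1) + (1/2) ^ l)"
      using N_orbit_bump_le N_nonneg[OF orbit_mem[OF bump_mem]] norm_gen_scale_le
      by (intro mult_mono) auto
    finally have z: "N (\<lambda>j. of_real (gen_scale i) * ?z j) \<le> 1 / (real l + 1) + (1/2) ^ l" by simp
    have "N ((T ^^ p l) (gen i)) = N (\<lambda>j. ?u j + of_real (gen_scale i) * ?z j)"
      by (simp add: gen_def bw_shift_pow_add_scale)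
    also have "\<dots> \<le> K * (N ?u + N (\<lambda>j. of_real (gen_scale i) * ?z j))" using mem by (rule N_add_le)
    also have "\<dots> \<le> K * ((1 / (real l + 1))^2 * Nu + (1 / (real l + 1) + (1/2) ^ l))"
      using u z K_ge_1 by (intro mult_left_mono add_mono) auto
    finally show ?case .
  qed
  have "(\<lambda>l. K * ((1 / (real l + 1))^2 * Nu + (1 / (real l + 1) + (1/2::real) ^ l)))
      \<longlonglongrightarrow> K * (0^2 * Nu + (0 + 0))"
    by (intro tendsto_intros tendsto_one_over_Suc LIMSEQ_power_zero) simp
  then show "(\<lambda>l. K * ((1 / (real l + 1))^2 * Nu + (1 / (real l + 1) + (1/2) ^ l))) \<longlonglongrightarrow> 0"
    by simp
qed simp

lemma tendsto_N_orbit: "x \<in> M \<Longrightarrow> (\<lambda>l. N ((T ^^ p l) x)) \<longlonglongrightarrow> 0"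
  by (elim combinationsE) (simp add: bw_shift_pow_combination tendsto_N_combination orbit_mem gen_mem
      tendsto_N_orbit_gen)

lemma N_orbit_q_ge:
  assumes x: "x = (\<lambda>j. \<Sum>i<n. c i * gen i j)" and site: "b k \<notin> gen_site ` {..<n}"
  shows "(real k + 1) ^ (k + 1) * norm (\<Sum>i<n. c i * of_real (gen_scale i) * of_real ((1 / (real k + 1)) ^ i))
    \<le> N ((T ^^ q k) x)"
proof -
  define S where "S = norm (\<Sum>i<n. c i * of_real (gen_scale i) * of_real ((1 / (real k + 1)) ^ i) :: 'a)"
  have "x (b k)
      = (\<Sum>i<n. of_real (bump_weight k) * (c i * of_real (gen_scale i) * of_real ((1 / (real k + 1)) ^ i)))"
    unfolding x
  proof (rule sum.cong[OF refl])
    fix i assume "i \<in> {..<n}"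
    then have "unit_seq (gen_site i) (b k) = (0 :: 'a)" using site by (auto simp: unit_seq_def)
    then show "c i * gen i (b k)
        = of_real (bump_weight k) * (c i * of_real (gen_scale i) * of_real ((1 / (real k + 1)) ^ i))"
      by (simp add: gen_def bump_coeff_def mult_ac del: of_real_power)
  qed
  then have x_bk: "norm (x (b k)) = bump_weight k * S"
    using bump_weight_pos[of k]
    by (simp add: S_def sum_distrib_left[symmetric] norm_mult abs_of_pos del: of_real_power)
  have weight: "2 ^ (k + 1) * B ^ p k * bump_weight k = 1" using one_le_B by (simp add: bump_weight_def)
  have "(real k + 1) ^ (k + 1) * S
      = ((real k + 1) ^ (k + 1) * 2 ^ (k + 1) * B ^ p k) * (bump_weight k * S)"
    using weight by (simp add: mult_ac)
  also have "\<dots> \<le> wprod w (b k) (q k) * (bump_weight k * S)"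
    using bump_weight_pos by (intro mult_right_mono wprod_b_q_ge) (simp add: S_def less_imp_le)
  also have "\<dots> \<le> N ((T ^^ q k) x)"
    unfolding x_bk[symmetric] using M_subset x combination_in_combinations
    by (intro wprod_mult_norm_le_N_orbit) blast
  finally show ?thesis by (simp add: S_def)
qed

lemma N_orbit_q_ge_lowest_term:
  assumes x: "x = (\<lambda>j. \<Sum>i<n. c i * gen i j)" and site: "b k \<notin> gen_site ` {..<n}"
    and i0: "i0 < n" "i0 \<le> k" and below: "\<And>i. i < i0 \<Longrightarrow> c i = 0"
  shows "(real k + 1) * norm (c i0 * of_real (gen_scale i0)) - (\<Sum>i<n. norm (c i * of_real (gen_scale i)))
    \<le> N ((T ^^ q k) x)"
proof -
  define a where "a i = c i * of_real (gen_scale i)" for i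
  define A where "A = norm (a i0)"
  define C where "C = (\<Sum>i<n. norm (a i))"
  define \<gamma> where "\<gamma> = 1 / (real k + 1)"
  have \<gamma>: "0 \<le> \<gamma>" "\<gamma> \<le> 1" by (auto simp: \<gamma>_def)
  define S where "S = norm (\<Sum>i<n. a i * of_real (\<gamma> ^ i))"
  have S_ge: "\<gamma> ^ i0 * (A - C * \<gamma>) \<le> S"
    unfolding S_def A_def C_def using \<gamma> i0(1)
    by (rule norm_sum_powers_ge_lowest_term) (simp add: a_def below)
  have N_ge: "(real k + 1) ^ (k + 1) * S \<le> N ((T ^^ q k) x)"
    using N_orbit_q_ge[OF x site] by (simp add: S_def a_def \<gamma>_def)
  have "x \<in> X" using M_subset x combination_in_combinations by blast
  then have N_nonneg': "0 \<le> N ((T ^^ q k) x)" by (intro N_nonneg orbit_mem)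
  have eq: "(real k + 1) * A - C = (real k + 1) * (A - C * \<gamma>)" by (simp add: \<gamma>_def field_simps)
  have "(real k + 1) * A - C \<le> N ((T ^^ q k) x)"
  proof (cases "0 \<le> A - C * \<gamma>")
    case True
    have "(real k + 1) * (A - C * \<gamma>) \<le> (real k + 1) ^ (k + 1) * \<gamma> ^ i0 * (A - C * \<gamma>)"
      using pow_mult_inverse_pow_ge[OF i0(2)] True unfolding \<gamma>_def by (rule mult_right_mono)
    also have "\<dots> \<le> (real k + 1) ^ (k + 1) * S" using S_ge by (simp add: mult.assoc)
    finally show ?thesis using eq N_ge by linarith
  next
    case False
    then have "(real k + 1) * (A - C * \<gamma>) \<le> 0" by (simp add: mult_nonneg_nonpos)
    then show ?thesis using eq N_nonneg' by linarith
  qed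
  then show ?thesis by (simp add: A_def C_def a_def)
qed

lemma filterlim_N_orbit_at_top:
  assumes "x \<in> M" "x \<noteq> (\<lambda>j. 0)"
  shows "filterlim (\<lambda>k. N ((T ^^ q k) x)) at_top sequentially"
proof -
  obtain c n where x: "x = (\<lambda>j. \<Sum>i<n. c i * gen i j)" using assms(1) by (rule combinationsE)
  have "\<exists>i. i < n \<and> c i \<noteq> 0"
  proof (rule ccontr)
    assume "\<not> (\<exists>i. i < n \<and> c i \<noteq> 0)"
    then have "x = (\<lambda>j. 0)" unfolding x by (intro ext sum.neutral) auto
    with assms(2) show False ..
  qed
  define i0 where "i0 = (LEAST i. i < n \<and> c i \<noteq> 0)"
  have i0: "i0 < n" "c i0 \<noteq> 0"
    using LeastI_ex[OF \<open>\<exists>i. i < n \<and> c i \<noteq> 0\<close>] by (auto simp: i0_def)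
  have below: "c i = 0" if "i < i0" for i
    using not_less_Least[of i "\<lambda>i. i < n \<and> c i \<noteq> 0"] that i0(1) by (auto simp: i0_def)
  define A where "A = norm (c i0 * of_real (gen_scale i0))"
  define C where "C = (\<Sum>i<n. norm (c i * of_real (gen_scale i)))"
  have A: "0 < A" using i0(2) gen_scale_pos[of i0] by (simp add: A_def norm_mult)
  have "finite (b -` gen_site ` {..<n})" using inj_b by (intro finite_vimageI) auto
  then obtain k0 where k0: "\<forall>k\<in>b -` gen_site ` {..<n}. k < k0" using finite_nat_set_iff_bounded by blast
  have site: "b k \<notin> gen_site ` {..<n}" if "k0 \<le> k" for k
  proof
    assume "b k \<in> gen_site ` {..<n}"
    then have "k < k0" using k0 by simp
    with that show False by simp
  qed
  have "filterlim (\<lambda>k. (A - C) + A * real k) at_top sequentially"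
    by (intro filterlim_tendsto_add_at_top[OF tendsto_const]
        filterlim_tendsto_pos_mult_at_top[OF tendsto_const A] filterlim_real_sequentially)
  moreover have "\<forall>\<^sub>F k in sequentially. (A - C) + A * real k \<le> N ((T ^^ q k) x)"
    using eventually_ge_at_top[of "max k0 i0"]
  proof eventually_elim
    case (elim k)
    then have "(real k + 1) * A - C \<le> N ((T ^^ q k) x)"
      unfolding A_def C_def using i0(1) below by (intro N_orbit_q_ge_lowest_term[OF x site]) auto
    then show ?case by (simp add: algebra_simps)
  qed
  ultimately show ?thesis by (rule filterlim_at_top_mono)
qed

lemma exists_combination_near:
  assumes "finite F" "0 < \<delta>"
  shows "\<exists>y\<in>M. N (\<lambda>j. (\<Sum>m\<in>F. c m * unit_seq m j) - y j) \<le> \<delta>"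
proof -
  define S where "S = K ^ card F * (\<Sum>m\<in>F. norm (c m))"
  obtain R :: nat where R: "S / \<delta> \<le> real R" using real_arch_simple by blast
  define \<epsilon> where "\<epsilon> = 1 / (real R + 1)"
  have \<epsilon>_pos: "0 < \<epsilon>" by (simp add: \<epsilon>_def)
  have "S \<le> \<delta> * (real R + 1)" using R \<open>0 < \<delta>\<close> by (simp add: pos_divide_le_eq algebra_simps)
  then have S\<epsilon>: "S * \<epsilon> \<le> \<delta>" by (simp add: \<epsilon>_def pos_divide_le_eq)
  define idx where "idx m = to_nat (m, R)" for m :: int
  have idx: "gen_site (idx m) = m" "gen_scale (idx m) = \<epsilon>" for m
    by (simp_all add: idx_def gen_site_def gen_scale_def \<epsilon>_def)
  define y where "y = (\<lambda>j. \<Sum>m\<in>F. c m * gen (idx m) j)"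
  have "y \<in> M"
    unfolding y_def using \<open>finite F\<close>
    by (intro sum_in_combinations scale_in_combinations generator_in_combinations)
  have diff: "(\<lambda>j. (\<Sum>m\<in>F. c m * unit_seq m j) - y j) = (\<lambda>j. \<Sum>m\<in>F. (- (c m * of_real \<epsilon>)) * bump (idx m) j)"
    by (rule ext) (simp add: y_def gen_def idx distrib_left sum.distrib sum_negf mult.assoc)
  have "N (\<lambda>j. \<Sum>m\<in>F. (- (c m * of_real \<epsilon>)) * bump (idx m) j)
      \<le> K ^ card F * (\<Sum>m\<in>F. N (\<lambda>j. (- (c m * of_real \<epsilon>)) * bump (idx m) j))"
    using \<open>finite F\<close> by (intro N_sum_le scale_mem bump_mem)
  also have "\<dots> \<le> K ^ card F * (\<Sum>m\<in>F. norm (c m) * \<epsilon>)"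
  proof (intro mult_left_mono sum_mono)
    fix m
    have "N (\<lambda>j. (- (c m * of_real \<epsilon>)) * bump (idx m) j) \<le> norm (- (c m * of_real \<epsilon>)) * N (bump (idx m))"
      by (intro N_scale_le bump_mem)
    also have "\<dots> \<le> norm (- (c m * of_real \<epsilon>)) * 1" by (intro mult_left_mono N_bump_le) simp
    finally show "N (\<lambda>j. (- (c m * of_real \<epsilon>)) * bump (idx m) j) \<le> norm (c m) * \<epsilon>"
      using \<epsilon>_pos by (simp add: norm_mult)
  qed (use K_ge_1 in simp)
  also have "\<dots> = S * \<epsilon>" by (simp add: S_def sum_distrib_right mult.assoc)
  finally have "N (\<lambda>j. (\<Sum>m\<in>F. c m * unit_seq m j) - y j) \<le> \<delta>" unfolding diff using S\<epsilon> by linarith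
  with \<open>y \<in> M\<close> show ?thesis by blast
qed

lemma dense_M: "dense_wrt N X M"
  unfolding dense_wrt_def
proof (intro conjI ballI allI impI M_subset)
  fix x e assume x: "x \<in> X" and "0 < (e::real)"
  then have eK: "0 < e / (2 * K)" using K_ge_1 by simp
  obtain F where F: "finite F" "N (\<lambda>i. if i \<in> F then 0 else x i) < e / (2 * K)"
    using truncation_small[OF x eK] by blast
  obtain y where y: "y \<in> M" "N (\<lambda>j. (\<Sum>m\<in>F. x m * unit_seq m j) - y j) \<le> e / (2 * K)"
    using exists_combination_near[OF F(1) eK] by blast
  define t where "t = (\<lambda>i. if i \<in> F then 0 else x i)"
  define d where "d = (\<lambda>j. (\<Sum>m\<in>F. x m * unit_seq m j) - y j)"
  have split: "(\<lambda>i. x i - y i) = (\<lambda>i. t i + d i)"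
    by (rule ext) (simp add: t_def d_def sum_unit_seq[OF F(1)])
  have t: "t \<in> X" unfolding t_def by (rule dominated_mem[OF x, of 1 _ 0]) auto
  have d: "d \<in> X"
    unfolding d_def using F(1) y(1) M_subset by (intro diff_mem sum_mem scale_mem unit_seq_mem) auto
  have "N (\<lambda>i. x i - y i) \<le> K * (N t + N d)" unfolding split using t d by (rule N_add_le)
  also have "\<dots> < K * (e / (2 * K) + e / (2 * K))"
    using F(2) y(2) K_ge_1 by (intro mult_strict_left_mono add_less_le_mono) (auto simp: t_def d_def)
  also have "\<dots> = e" using K_ge_1 by simp
  finally show "\<exists>s\<in>M. N (\<lambda>i. x i - s i) < e" using y(1) by blast
qed

lemma gen_nonzero: "gen i \<noteq> (\<lambda>j. 0)"
proof
  define r where "r = (if gen_site i \<in> range b then bump_coeff i (inv b (gen_site i)) else 0)"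
  have "0 \<le> r" using bump_coeff_pos by (simp add: r_def less_imp_le)
  then have pos: "0 < 1 + gen_scale i * r" using gen_scale_pos[of i] by (simp add: add_pos_nonneg)
  have val: "gen i (gen_site i) = of_real (1 + gen_scale i * r)"
    by (simp add: gen_def unit_seq_def bump_def r_def)
  assume "gen i = (\<lambda>j. 0)"
  then have "of_real (1 + gen_scale i * r) = (0 :: 'a)" using val by simp
  then have "1 + gen_scale i * r = 0" by (simp only: of_real_eq_0_iff)
  with pos show False by linarith
qed

lemma irregular_vector_M: "x \<in> M \<Longrightarrow> x \<noteq> (\<lambda>j. 0) \<Longrightarrow> irregular_vector N T x"
  using M_subset
  by (intro irregular_vectorI[where r = p and s = q] tendsto_N_orbit filterlim_N_orbit_at_top) auto

lemma dense_irregular_manifold_M: "dense_irregular_manifold N X T"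
  unfolding dense_irregular_manifold_def
  by (intro exI[of _ M] conjI seq_subspace_combinations gen_mem dense_M ballI impI irregular_vector_M)

lemma uniformly_li_yorke_scrambled_M: "uniformly_li_yorke_scrambled N T M"
proof -
  have lim: "(\<lambda>n. N (\<lambda>i. (T ^^ p n) x i - (T ^^ p n) y i)) \<longlonglongrightarrow> 0 \<and>
      filterlim (\<lambda>n. N (\<lambda>i. (T ^^ q n) x i - (T ^^ q n) y i)) at_top sequentially"
    if "x \<in> M" "y \<in> M" "x \<noteq> y" for x y
  proof -
    have d: "(\<lambda>j. x j - y j) \<in> M" "(\<lambda>j. x j - y j) \<noteq> (\<lambda>j. 0)"
      using that by (auto simp: diff_in_combinations fun_eq_iff)
    show ?thesis
      using tendsto_N_orbit[OF d(1)] filterlim_N_orbit_at_top[OF d] unfolding bw_shift_pow_diff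
      by (rule conjI)
  qed
  have "\<exists>x\<in>M. \<exists>y\<in>M. x \<noteq> y" using gen_in_M zero_in_combinations gen_nonzero by blast
  with lim show ?thesis unfolding uniformly_li_yorke_scrambled_def by blast
qed

lemma densely_uniformly_li_yorke_chaotic_M: "densely_uniformly_li_yorke_chaotic N X T"
  unfolding densely_uniformly_li_yorke_chaotic_def
  by (intro exI[of _ M] conjI dense_M uncountable_combinations[OF gen_nonzero]
      uniformly_li_yorke_scrambled_M)

end

context weighted_shift
begin

lemma exists_block_sequence:
  assumes small: "\<And>e. 0 < e \<Longrightarrow> \<exists>\<^sub>F n in sequentially. wprod w 0 n < e"
    and large: "\<And>H. \<exists>b n. H < wprod w b n"
  shows "\<exists>p q b. \<forall>k.
    (\<forall>c. \<bar>c\<bar> \<le> int k \<longrightarrow> wprod w c (p k) \<le> 1 / (real k + 1)^2) \<and>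
    (real k + 1) ^ (k + 1) * 2 ^ (k + 1) * B ^ p k \<le> wprod w (b k) (q k) \<and>
    p k < p (Suc k) \<and> \<bar>b k\<bar> < \<bar>b (Suc k)\<bar> \<and>
    (\<forall>c. \<bar>c\<bar> \<le> \<bar>b k\<bar> \<longrightarrow> wprod w c (p (Suc k)) \<le> 1 / (real (Suc k) + 1)^2)"
proof -
  define P where "P k s \<longleftrightarrow> (case s of (p, q, b) \<Rightarrow>
      (\<forall>c. \<bar>c\<bar> \<le> int k \<longrightarrow> wprod w c p \<le> 1 / (real k + 1)^2) \<and>
      (real k + 1) ^ (k + 1) * 2 ^ (k + 1) * B ^ p \<le> wprod w b q)"
    for k and s :: "nat \<times> nat \<times> int"
  define Q where "Q k s s' \<longleftrightarrow> (case s of (p, q, b) \<Rightarrow> case s' of (p', q', b') \<Rightarrow>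
      p < p' \<and> \<bar>b\<bar> < \<bar>b'\<bar> \<and> (\<forall>c. \<bar>c\<bar> \<le> \<bar>b\<bar> \<longrightarrow> wprod w c p' \<le> 1 / (real (Suc k) + 1)^2))"
    for k and s s' :: "nat \<times> nat \<times> int"
  have "\<exists>f. \<forall>k. P k (f k) \<and> Q k (f k) (f (Suc k))"
  proof (rule dependent_nat_choice)
    obtain p q b where "\<forall>c. \<bar>c\<bar> \<le> 0 \<longrightarrow> wprod w c p \<le> 1 / (real 0 + 1)^2"
      "(real 0 + 1) ^ (0 + 1) * 2 ^ (0 + 1) * B ^ p \<le> wprod w b q"
      using exists_small_and_large_wprod[OF small large, where p_min = 0 and R = 0
          and e = "1 / (real 0 + 1)^2" and H = "(real 0 + 1) ^ (0 + 1) * 2 ^ (0 + 1)"] by auto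
    then show "\<exists>s. P 0 s" by (intro exI[of _ "(p, q, b)"]) (simp add: P_def)
  next
    fix s k assume "P k s"
    obtain p q b where s: "s = (p, q, b)" by (cases s)
    let ?R = "max \<bar>b\<bar> (int (Suc k))"
    obtain p' q' b' where "p < p'" "?R < \<bar>b'\<bar>"
      "\<forall>c. \<bar>c\<bar> \<le> ?R \<longrightarrow> wprod w c p' \<le> 1 / (real (Suc k) + 1)^2"
      "(real (Suc k) + 1) ^ (Suc k + 1) * 2 ^ (Suc k + 1) * B ^ p' \<le> wprod w b' q'"
      using exists_small_and_large_wprod[OF small large, where p_min = p and R = ?R
          and e = "1 / (real (Suc k) + 1)^2" and H = "(real (Suc k) + 1) ^ (Suc k + 1) * 2 ^ (Suc k + 1)"]
      by auto
    then show "\<exists>s'. P (Suc k) s' \<and> Q k s s'"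
      by (intro exI[of _ "(p', q', b')"]) (auto simp: P_def Q_def s)
  qed
  then obtain f where f: "\<And>k. P k (f k)" "\<And>k. Q k (f k) (f (Suc k))" by blast
  define p where "p k = fst (f k)" for k
  define q where "q k = fst (snd (f k))" for k
  define b where "b k = snd (snd (f k))" for k
  have fk: "f k = (p k, q k, b k)" for k by (simp add: p_def q_def b_def)
  show ?thesis
  proof (rule exI[of _ p], rule exI[of _ q], rule exI[of _ b], rule allI)
    fix k
    show "(\<forall>c. \<bar>c\<bar> \<le> int k \<longrightarrow> wprod w c (p k) \<le> 1 / (real k + 1)^2) \<and>
      (real k + 1) ^ (k + 1) * 2 ^ (k + 1) * B ^ p k \<le> wprod w (b k) (q k) \<and>
      p k < p (Suc k) \<and> \<bar>b k\<bar> < \<bar>b (Suc k)\<bar> \<and>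
      (\<forall>c. \<bar>c\<bar> \<le> \<bar>b k\<bar> \<longrightarrow> wprod w c (p (Suc k)) \<le> 1 / (real (Suc k) + 1)^2)"
      using f(1)[of k] f(2)[of k] unfolding P_def Q_def fk by simp
  qed
qed

lemma exists_irregular_construction:
  assumes small: "\<And>e. 0 < e \<Longrightarrow> \<exists>\<^sub>F n in sequentially. wprod w 0 n < e"
    and large: "\<And>H. \<exists>b n. H < wprod w b n"
  shows "\<exists>p q b. irregular_construction X N K w B p q b"
proof -
  obtain p q b where blocks:
    "\<And>k. (\<forall>c. \<bar>c\<bar> \<le> int k \<longrightarrow> wprod w c (p k) \<le> 1 / (real k + 1)^2)"
    "\<And>k. (real k + 1) ^ (k + 1) * 2 ^ (k + 1) * B ^ p k \<le> wprod w (b k) (q k)"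
    "\<And>k. p k < p (Suc k)" "\<And>k. \<bar>b k\<bar> < \<bar>b (Suc k)\<bar>"
    "\<And>k. \<forall>c. \<bar>c\<bar> \<le> \<bar>b k\<bar> \<longrightarrow> wprod w c (p (Suc k)) \<le> 1 / (real (Suc k) + 1)^2"
    using exists_block_sequence[OF small large] by blast
  have b_mono: "strict_mono (\<lambda>k. \<bar>b k\<bar>)" using blocks(4) by (simp add: strict_mono_Suc_iff)
  have "irregular_construction X N K w B p q b"
  proof (intro irregular_construction.intro[OF weighted_shift_axioms]
      irregular_construction_axioms.intro)
    show "mono p" using blocks(3) by (intro strict_mono_mono) (simp add: strict_mono_Suc_iff)
    show "inj b"
    proof (rule injI)
      fix x y assume "b x = b y"
      then show "x = y" using strict_mono_eq[OF b_mono, of x y] by simp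
    qed
    show "wprod w (b j) (p l) \<le> 1 / (real l + 1)^2" if jl: "j < l" for j l
    proof -
      obtain l' where l: "l = Suc l'" using jl by (cases l) auto
      have "\<bar>b j\<bar> \<le> \<bar>b l'\<bar>" using jl l by (simp add: strict_mono_less_eq[OF b_mono])
      then show ?thesis using blocks(5)[of l'] l by blast
    qed
    show "wprod w m (p l) \<le> 1 / (real l + 1)^2" if "\<bar>m\<bar> \<le> int l" for m l
      using blocks(1)[of l] that by blast
  qed (rule blocks(2))
  then show ?thesis by blast
qed

lemma weight_conditions_imp_chaos:
  assumes "liminf (\<lambda>n. ereal (wprod w 0 n)) = 0" "\<forall>H. \<exists>b n. H < wprod w b n"
  shows "dense_irregular_manifold N X T \<and> densely_uniformly_li_yorke_chaotic N X T"
proof -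
  have "\<forall>e>0. \<exists>\<^sub>F n in sequentially. wprod w 0 n < e"
    using assms(1) liminf_ereal_eq_0_iff[of "wprod w 0"] wprod_pos less_imp_le by blast
  then obtain p q b where "irregular_construction X N K w B p q b"
    using exists_irregular_construction assms(2) by blast
  then interpret irregular_construction X N K w B p q b .
  show ?thesis using dense_irregular_manifold_M densely_uniformly_li_yorke_chaotic_M ..
qed

lemma densely_uniformly_imp_li_yorke_chaotic:
  assumes "densely_uniformly_li_yorke_chaotic N X T" shows "li_yorke_chaotic N X T"
proof -
  obtain S where S: "dense_wrt N X S" "uncountable S" "uniformly_li_yorke_scrambled N T S"
    using assms unfolding densely_uniformly_li_yorke_chaotic_def by blast
  from S(3) obtain r s where rs: "\<forall>x\<in>S. \<forall>y\<in>S. x \<noteq> y \<longrightarrow>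
      (\<lambda>n. N (\<lambda>i. (T ^^ r n) x i - (T ^^ r n) y i)) \<longlonglongrightarrow> 0 \<and>
      filterlim (\<lambda>n. N (\<lambda>i. (T ^^ s n) x i - (T ^^ s n) y i)) at_top sequentially"
    unfolding uniformly_li_yorke_scrambled_def by blast
  have SX: "S \<subseteq> X" using S(1) by (simp add: dense_wrt_def)
  have "li_yorke_pair N T x y" if "x \<in> S" "y \<in> S" "x \<noteq> y" for x y
  proof (rule irregular_diff_imp_li_yorke_pair, rule irregular_vectorI)
    show "(\<lambda>j. x j - y j) \<in> X" using that SX by (intro diff_mem) auto
    show "(\<lambda>j. x j - y j) \<noteq> (\<lambda>i. 0)" using that by (auto simp: fun_eq_iff)
    show "(\<lambda>k. N ((T ^^ r k) (\<lambda>j. x j - y j))) \<longlonglongrightarrow> 0"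
      and "filterlim (\<lambda>k. N ((T ^^ s k) (\<lambda>j. x j - y j))) at_top sequentially"
      using rs that unfolding bw_shift_pow_diff by blast+
  qed
  then show ?thesis unfolding li_yorke_chaotic_def using SX S(2) by blast
qed

lemma li_yorke_chaotic_imp_pair:
  assumes "li_yorke_chaotic N X T" shows "\<exists>x\<in>X. \<exists>y\<in>X. li_yorke_pair N T x y"
proof -
  obtain S where S: "S \<subseteq> X" "uncountable S" "\<forall>x\<in>S. \<forall>y\<in>S. x \<noteq> y \<longrightarrow> li_yorke_pair N T x y"
    using assms unfolding li_yorke_chaotic_def by blast
  have "infinite S" using S(2) by (rule uncountable_infinite)
  then have "S \<noteq> {}" by (rule infinite_imp_nonempty)
  then obtain x where x: "x \<in> S" by blast
  have "infinite (S - {x})" using \<open>infinite S\<close> by simp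
  then have "S - {x} \<noteq> {}" by (rule infinite_imp_nonempty)
  then obtain y where y: "y \<in> S" "x \<noteq> y" by blast
  then have "li_yorke_pair N T x y" using S(3) x by blast
  moreover have "x \<in> X" "y \<in> X" using S(1) x y by auto
  ultimately show ?thesis by blast
qed

lemma dense_irregular_manifold_imp_pair:
  assumes "dense_irregular_manifold N X T" shows "\<exists>x\<in>X. \<exists>y\<in>X. li_yorke_pair N T x y"
proof -
  obtain M where M: "seq_subspace X M" "dense_wrt N X M" "\<forall>x\<in>M. x \<noteq> (\<lambda>i. 0) \<longrightarrow> irregular_vector N T x"
    using assms unfolding dense_irregular_manifold_def by blast
  have "\<forall>x\<in>X. \<forall>e>0. \<exists>s\<in>M. N (\<lambda>i. x i - s i) < e" using M(2) by (simp add: dense_wrt_def)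
  from this[rule_format, OF unit_seq_mem zero_less_one]
  obtain s where s: "s \<in> M" "N (\<lambda>i. unit_seq 0 i - s i) < 1" by blast
  have "s \<noteq> (\<lambda>i. 0)"
  proof
    assume "s = (\<lambda>i. 0)"
    then have "N (unit_seq 0) < 1" using s(2) by simp
    moreover have "norm (unit_seq 0 0 :: 'a) \<le> N (unit_seq 0)" by (rule norm_le_N[OF unit_seq_mem])
    ultimately show False by (simp add: unit_seq_def)
  qed
  then have "irregular_vector N T (\<lambda>j. s j - 0)" using M(3) s(1) by simp
  then have "li_yorke_pair N T s (\<lambda>i. 0)" by (rule irregular_diff_imp_li_yorke_pair)
  moreover have "s \<in> X" using M(1) s(1) by (auto simp: seq_subspace_def)
  ultimately show ?thesis using zero_mem by blast
qed

theorem li_yorke_chaos_equivalences: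
  "((liminf (\<lambda>n. ereal (wprod w 0 n)) = 0 \<and> (\<forall>H. \<exists>b n. H < wprod w b n))
      \<longleftrightarrow> (\<exists>x\<in>X. \<exists>y\<in>X. li_yorke_pair N T x y))
   \<and> ((\<exists>x\<in>X. \<exists>y\<in>X. li_yorke_pair N T x y) \<longleftrightarrow> li_yorke_chaotic N X T)
   \<and> (li_yorke_chaotic N X T \<longleftrightarrow> dense_irregular_manifold N X T)
   \<and> (dense_irregular_manifold N X T \<longleftrightarrow> densely_uniformly_li_yorke_chaotic N X T)"
proof -
  let ?C = "liminf (\<lambda>n. ereal (wprod w 0 n)) = 0 \<and> (\<forall>H. \<exists>b n. H < wprod w b n)"
  let ?P = "\<exists>x\<in>X. \<exists>y\<in>X. li_yorke_pair N T x y"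
  have "?C \<Longrightarrow> dense_irregular_manifold N X T \<and> densely_uniformly_li_yorke_chaotic N X T"
    using weight_conditions_imp_chaos by blast
  moreover have "?P \<Longrightarrow> ?C" using li_yorke_pair_imp_weight_conditions by blast
  moreover note densely_uniformly_imp_li_yorke_chaotic li_yorke_chaotic_imp_pair
    dense_irregular_manifold_imp_pair
  ultimately show ?thesis by argo
qed

end

lemma SUP_prod_eq_infinity_iff:
  "(SUP k::int. SUP n::nat. ereal (\<Prod>j\<in>{k..k + int n}. norm (w j))) = \<infinity> \<longleftrightarrow> (\<forall>H. \<exists>b n. H < wprod w b n)"
proof -
  have prod: "(\<Prod>j\<in>{k..k + int n}. norm (w j)) = wprod w (k + int n) (Suc n)" for k n
    using prod_atLeastAtMost_eq_wprod[of w "k + int n" "Suc n"] by simp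
  have "(SUP k::int. SUP n::nat. ereal (wprod w (k + int n) (Suc n))) = \<infinity> \<longleftrightarrow>
      (\<forall>H. \<exists>k n. H < wprod w (k + int n) (Suc n))"
  proof
    assume sup: "(SUP k::int. SUP n::nat. ereal (wprod w (k + int n) (Suc n))) = \<infinity>"
    show "\<forall>H. \<exists>k n. H < wprod w (k + int n) (Suc n)"
    proof
      fix C
      have "ereal C < (SUP k::int. SUP n::nat. ereal (wprod w (k + int n) (Suc n)))" using sup by simp
      then show "\<exists>k n. C < wprod w (k + int n) (Suc n)" by (auto simp: less_SUP_iff)
    qed
  next
    assume H: "\<forall>H. \<exists>k n. H < wprod w (k + int n) (Suc n)"
    show "(SUP k::int. SUP n::nat. ereal (wprod w (k + int n) (Suc n))) = \<infinity>"
    proof (rule ereal_top)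
      fix C
      obtain k n where "C < wprod w (k + int n) (Suc n)" using H by blast
      then show "ereal C \<le> (SUP k::int. SUP n::nat. ereal (wprod w (k + int n) (Suc n)))"
        by (intro SUP_upper2[of k] SUP_upper2[of n]) auto
    qed
  qed
  also have "\<dots> \<longleftrightarrow> (\<forall>H. \<exists>b n. H < wprod w b n)"
  proof
    assume H: "\<forall>H. \<exists>b n. H < wprod w b n"
    show "\<forall>H. \<exists>k n. H < wprod w (k + int n) (Suc n)"
    proof
      fix C
      obtain b n where bn: "max C 1 < wprod w b n" using H by blast
      then obtain m where "n = Suc m" by (cases n) (auto simp: wprod_def)
      then show "\<exists>k n. C < wprod w (k + int n) (Suc n)"
        using bn by (intro exI[of _ "b - int m"] exI[of _ m]) auto
    qed
  qed blast
  finally show ?thesis by (simp only: prod)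
qed

theorem theorem3p10:
  fixes w :: "int \<Rightarrow> 'a::{real_normed_field,banach}"
    and X :: "(int \<Rightarrow> 'a) set" and N :: "(int \<Rightarrow> 'a) \<Rightarrow> real" and p :: real
  assumes space: "(1 \<le> p \<and> X = lp_space p \<and> N = lp_norm p) \<or> (X = c0_space \<and> N = sup_norm)"
    and bdd: "bounded (range w)"
    and nz: "\<And>j. w j \<noteq> 0"
  defines "T \<equiv> bw_shift w"
  shows
    "((liminf (\<lambda>n::nat. ereal (\<Prod>j\<in>{- int n + 1..0}. norm (w j))) = 0 \<and>
       (SUP k::int. SUP n::nat. ereal (\<Prod>j\<in>{k..k + int n}. norm (w j))) = \<infinity>)
      \<longleftrightarrow> (\<exists>x\<in>X. \<exists>y\<in>X. li_yorke_pair N T x y))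
   \<and> ((\<exists>x\<in>X. \<exists>y\<in>X. li_yorke_pair N T x y) \<longleftrightarrow> li_yorke_chaotic N X T)
   \<and> (li_yorke_chaotic N X T \<longleftrightarrow> dense_irregular_manifold N X T)
   \<and> (dense_irregular_manifold N X T \<longleftrightarrow> densely_uniformly_li_yorke_chaotic N X T)"
proof -
  obtain K where "sequence_space X N K"
    using space sequence_space_lp[of p] sequence_space_c0 by auto
  moreover obtain B0 where "\<And>j. norm (w j) \<le> B0" using bdd unfolding bounded_iff by blast
  ultimately interpret weighted_shift X N K w "max 1 B0"
    by (intro weighted_shift.intro weighted_shift_axioms.intro) (use nz in \<open>auto simp: le_max_iff_disj\<close>)
  have "(\<Prod>j\<in>{- int n + 1..0}. norm (w j)) = wprod w 0 n" for n
    using prod_atLeastAtMost_eq_wprod[of w 0 n] by simp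
  then show ?thesis
    unfolding T_def SUP_prod_eq_infinity_iff by (simp only: li_yorke_chaos_equivalences)
qed

end
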